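(* Suppose $p=p(n)$ satisfies $n^{-2}\ll1-p\le(D+o(1))/n$ for some constant $D\in(0,\infty)$, and set $q:=1-p$. Let $\varepsilon>0$ and let $\omega=\omega(n)\to\infty$ as $n\to\infty$. Then: (i) there is an interval of length $\lfloor\omega n\sqrt{q}\rfloor$ that contains $\chi(G_{n,p})$ with high probability; (ii) there is a constant $c=c(\varepsilon,D)>0$ such that no interval of length $\lfloor cn\sqrt{q}\rfloor$ contains $\chi(G_{n,p})$ with probability at least $\varepsilon+o(1)$, i.e., for every sequence of intervals $I_n$ of length $\lfloor cn\sqrt q\rfloor$ one has $\Pr(\chi(G_{n,p})\in I_n)\le\varepsilon+o(1)$.
   Context: $G_{n,p}$ denotes the binomial random graph on vertex set $[n]$ in which each pair of vertices is an edge independently with probability $p$; $\chi$ denotes the chromatic number. For positive functions, $a\ll b$ means $a/b\to0$ as $n\to\infty$; $o(1)$ denotes a quantity tending to $0$ as $n\to\infty$. "With high probability" means with probability tending to $1$. "There is an interval of length $\ell(n)$ that contains $\chi(G_{n,p})$ with high probability" means there exist intervals $I_n$ of length $\ell(n)$ with $\Pr(\chi(G_{n,p})\in I_n)\to1$. *)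

theory Defs
  imports "HOL-Probability.Probability"
begin

text \<open>Graphs on vertex set {0..<n}: a graph is a predicate E on pairs (i,j) with i<j<n
  (the value of E outside such pairs is irrelevant / fixed to False).\<close>

definition vertex_pairs :: "nat \<Rightarrow> (nat \<times> nat) set" where
  "vertex_pairs n = {(i, j). i < j \<and> j < n}"

definition Gnp :: "nat \<Rightarrow> real \<Rightarrow> (nat \<times> nat \<Rightarrow> bool) pmf" where
  "Gnp n p = Pi_pmf (vertex_pairs n) False (\<lambda>_. bernoulli_pmf p)"

definition proper_colouring :: "nat \<Rightarrow> (nat \<times> nat \<Rightarrow> bool) \<Rightarrow> nat \<Rightarrow> (nat \<Rightarrow> nat) \<Rightarrow> bool" where
  "proper_colouring n E k f \<longleftrightarrow>
     (\<forall>i<n. f i < k) \<and> (\<forall>i j. i < j \<and> j < n \<and> E (i, j) \<longrightarrow> f i \<noteq> f j)"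

definition chromatic_number :: "nat \<Rightarrow> (nat \<times> nat \<Rightarrow> bool) \<Rightarrow> nat" where
  "chromatic_number n E = (LEAST k. \<exists>f. proper_colouring n E k f)"

definition chi_prob :: "nat \<Rightarrow> real \<Rightarrow> nat set \<Rightarrow> real" where
  "chi_prob n p S = measure_pmf.prob (Gnp n p) {E. chromatic_number n E \<in> S}"

definition edge_prob_regime :: "real \<Rightarrow> (nat \<Rightarrow> real) \<Rightarrow> bool" where
  "edge_prob_regime D p \<longleftrightarrow>
     (\<forall>n. 0 \<le> p n \<and> p n \<le> 1) \<and>
     filterlim (\<lambda>n. real n ^ 2 * (1 - p n)) at_top sequentially \<and>
     (\<exists>e. e \<longlonglongrightarrow> 0 \<and> (\<forall>\<^sub>F n in sequentially. 1 - p n \<le> (D + e n) / real n))"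

end

(*
  Concentration: flipping one pair changes the chromatic number by at most one, so the
  Efron-Stein inequality gives Var chi(G) <= n^2 q, and Chebyshev's inequality places chi(G)
  in a window of length omega n sqrt q around its mean.

  Anti-concentration: call a non-edge uv isolated if u and v are adjacent to all other
  vertices. Adding all isolated non-edges maps G to a graph G' whose universal vertices W
  contain them as a matching; conversely every matching A on W gives the preimage G' - A, with
  chi(G' - A) = chi(G') - |A| and P(G' - A) = P(G') (q/p)^|A|. Hence, given G', chi(G) is
  chi(G') minus the size of a random matching of K_|W| drawn with probability proportional to
  (q/p)^|A|; this size has a log-concave law whose atoms are O(1 / (|W| sqrt q)). Since
  |W| >= n p^n / 2 = Omega(n) with high probability, a window of length c n sqrt q has
  probability at most epsilon once c is small.
*)
theory Submission
  imports Defs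
begin

section \<open>Variance of functions of independent bits\<close>

lemma finite_set_pmf_Pi_bernoulli:
  "finite A \<Longrightarrow> finite (set_pmf (Pi_pmf A dflt (\<lambda>_. bernoulli_pmf p)))"
proof -
  assume A: "finite A"
  have "set_pmf (Pi_pmf A dflt (\<lambda>_. bernoulli_pmf p)) \<subseteq> PiE_dflt A dflt (\<lambda>_. UNIV)"
    using set_Pi_pmf_subset[OF A, of dflt] by (auto simp: PiE_dflt_def)
  then show ?thesis
    by (rule finite_subset) (simp add: A finite_PiE_dflt)
qed

lemma integral_Pi_pmf_bernoulli_insert:
  fixes h :: "('a \<Rightarrow> bool) \<Rightarrow> real"
  assumes "finite A" "x \<notin> A" "0 \<le> p" "p \<le> 1"
  shows "(\<integral>g. h g \<partial>Pi_pmf (insert x A) dflt (\<lambda>_. bernoulli_pmf p)) =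
     p * (\<integral>g. h (g(x:=True)) \<partial>Pi_pmf A dflt (\<lambda>_. bernoulli_pmf p))
   + (1 - p) * (\<integral>g. h (g(x:=False)) \<partial>Pi_pmf A dflt (\<lambda>_. bernoulli_pmf p))"
proof -
  let ?M = "Pi_pmf A dflt (\<lambda>_. bernoulli_pmf p)"
  have M: "Pi_pmf (insert x A) dflt (\<lambda>_. bernoulli_pmf p) =
      bernoulli_pmf p \<bind> (\<lambda>y. map_pmf (\<lambda>g. g(x:=y)) ?M)"
    using assms(1,2) by (simp add: Pi_pmf_insert' map_pmf_def)
  show ?thesis
    unfolding M using assms finite_set_pmf_Pi_bernoulli[OF assms(1)]
    by (subst pmf_expectation_bind[where A = UNIV]) (auto simp: UNIV_bool)
qed

lemma variance_pmf_finite: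
  fixes f :: "'a \<Rightarrow> real"
  assumes "finite (set_pmf M)"
  shows "measure_pmf.variance M f = (\<integral>x. (f x)\<^sup>2 \<partial>M) - (\<integral>x. f x \<partial>M)\<^sup>2"
  using assms by (intro measure_pmf.variance_eq integrable_measure_pmf_finite)

lemma variance_Pi_pmf_bernoulli_insert:
  fixes f :: "('a \<Rightarrow> bool) \<Rightarrow> real" and dflt :: bool
  assumes "finite A" "x \<notin> A" "0 \<le> p" "p \<le> 1"
  defines "M \<equiv> Pi_pmf A dflt (\<lambda>_. bernoulli_pmf p)"
  shows "measure_pmf.variance (Pi_pmf (insert x A) dflt (\<lambda>_. bernoulli_pmf p)) f
      = p * measure_pmf.variance M (\<lambda>g. f (g(x:=True)))
        + (1 - p) * measure_pmf.variance M (\<lambda>g. f (g(x:=False)))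
        + p * (1 - p) * ((\<integral>g. f (g(x:=True)) \<partial>M) - (\<integral>g. f (g(x:=False)) \<partial>M))\<^sup>2"
proof -
  define m where "m b = (\<integral>g. f (g(x:=b)) \<partial>M)" for b
  define s where "s b = (\<integral>g. (f (g(x:=b)))\<^sup>2 \<partial>M)" for b
  have var_b: "measure_pmf.variance M (\<lambda>g. f (g(x:=b))) = s b - (m b)\<^sup>2" for b
    unfolding s_def m_def M_def
      by (rule variance_pmf_finite[OF finite_set_pmf_Pi_bernoulli[OF assms(1)]])
  have var: "measure_pmf.variance (Pi_pmf (insert x A) dflt (\<lambda>_. bernoulli_pmf p)) f
      = (p * s True + (1 - p) * s False) - (p * m True + (1 - p) * m False)\<^sup>2"
    unfolding s_def m_def M_def
    using variance_pmf_finite[OF finite_set_pmf_Pi_bernoulli[of "insert x A"], of dflt p f]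
    by (simp only: finite_insert assms(1) simp_thms integral_Pi_pmf_bernoulli_insert[OF assms(1-4)])
  show ?thesis
    unfolding var var_b unfolding m_def[symmetric] by (simp add: power2_eq_square algebra_simps)
qed

lemma variance_Pi_pmf_bernoulli_le:
  fixes f :: "('a \<Rightarrow> bool) \<Rightarrow> real"
  assumes "finite A" "0 \<le> p" "p \<le> 1"
    and "\<And>g x. x \<in> A \<Longrightarrow> \<bar>f (g(x:=True)) - f (g(x:=False))\<bar> \<le> c"
  shows "measure_pmf.variance (Pi_pmf A dflt (\<lambda>_. bernoulli_pmf p)) f
           \<le> real (card A) * (p * (1 - p)) * c\<^sup>2"
  using assms(1,4)
proof (induction A arbitrary: f rule: finite_induct)
  case empty
  then show ?case by simp
next
  case (insert x A)
  let ?M = "Pi_pmf A dflt (\<lambda>_. bernoulli_pmf p)"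
  let ?V = "real (card A) * (p * (1 - p)) * c\<^sup>2"
  have IH: "measure_pmf.variance ?M (\<lambda>g. f (g(x:=b))) \<le> ?V" for b
  proof (rule insert.IH)
    fix g y assume "y \<in> A"
    moreover from this have "y \<noteq> x" using insert.hyps(2) by auto
    ultimately show "\<bar>f (g(y:=True, x:=b)) - f (g(y:=False, x:=b))\<bar> \<le> c"
      using insert.prems[of y "g(x:=b)"] by (metis fun_upd_twist insertI2)
  qed
  have fin: "finite (set_pmf ?M)" by (rule finite_set_pmf_Pi_bernoulli[OF insert.hyps(1)])
  have "\<bar>(\<integral>g. f (g(x:=True)) \<partial>?M) - (\<integral>g. f (g(x:=False)) \<partial>?M)\<bar>
      = \<bar>\<integral>g. f (g(x:=True)) - f (g(x:=False)) \<partial>?M\<bar>"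
    using fin by (simp add: integrable_measure_pmf_finite)
  also have "\<dots> \<le> (\<integral>g. c \<partial>?M)"
    using insert.prems[of x]
    by (intro integral_abs_bound[THEN order_trans] integral_mono integrable_measure_pmf_finite fin)
       blast+
  finally have "((\<integral>g. f (g(x:=True)) \<partial>?M) - (\<integral>g. f (g(x:=False)) \<partial>?M))\<^sup>2 \<le> c\<^sup>2"
    using power_mono[of _ c 2] by fastforce
  then have "measure_pmf.variance (Pi_pmf (insert x A) dflt (\<lambda>_. bernoulli_pmf p)) f
      \<le> p * ?V + (1 - p) * ?V + p * (1 - p) * c\<^sup>2"
    unfolding variance_Pi_pmf_bernoulli_insert[OF insert.hyps assms(2,3)]
    using IH[of True] IH[of False] assms(2,3) by (intro add_mono mult_left_mono) auto
  also have "\<dots> = real (card (insert x A)) * (p * (1 - p)) * c\<^sup>2"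
    using insert.hyps by (simp add: algebra_simps)
  finally show ?case .
qed

section \<open>The chromatic number under edge changes\<close>

lemma chromatic_number_colouring: "\<exists>f. proper_colouring n E (chromatic_number n E) f"
proof -
  have "proper_colouring n E n id" by (simp add: proper_colouring_def)
  then show ?thesis
    unfolding chromatic_number_def using LeastI_ex[of "\<lambda>k. \<exists>f. proper_colouring n E k f"] by blast
qed

lemma chromatic_number_le: "proper_colouring n E k f \<Longrightarrow> chromatic_number n E \<le> k"
  unfolding chromatic_number_def by (rule Least_le) blast

lemma chromatic_number_mono:
  assumes "\<And>x. E x \<Longrightarrow> E' x"
  shows "chromatic_number n E \<le> chromatic_number n E'"
proof -
  obtain f where "proper_colouring n E' (chromatic_number n E') f"
    using chromatic_number_colouring by blast
  then have "proper_colouring n E (chromatic_number n E') f"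
    using assms unfolding proper_colouring_def by blast
  then show ?thesis by (rule chromatic_number_le)
qed

lemma chromatic_number_add_edge:
  "chromatic_number n (E(x:=True)) \<le> chromatic_number n E + 1"
proof -
  define k where "k = chromatic_number n E"
  obtain f where f: "proper_colouring n E k f"
    unfolding k_def using chromatic_number_colouring by blast
  \<comment> \<open>a fresh colour for the larger endpoint of the new edge\<close>
  obtain i j where x: "x = (i, j)" by (cases x)
  have "proper_colouring n (E(x:=True)) (k + 1) (f(j := k))"
    unfolding proper_colouring_def
  proof (intro conjI allI impI)
    fix a assume "a < n"
    then show "(f(j := k)) a < k + 1" using f by (simp add: proper_colouring_def less_SucI)
  next
    fix a b assume ab: "a < b \<and> b < n \<and> (E(x := True)) (a, b)"
    then have "f a < k" "f b < k" "(a, b) \<noteq> (i, j) \<Longrightarrow> f a \<noteq> f b"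
      using f x by (auto simp: proper_colouring_def)
    then show "(f(j := k)) a \<noteq> (f(j := k)) b" using ab by auto
  qed
  then show ?thesis unfolding k_def by (rule chromatic_number_le)
qed

lemma chromatic_number_flip_edge:
  "\<bar>real (chromatic_number n (E(x:=True))) - real (chromatic_number n (E(x:=False)))\<bar> \<le> 1"
  using chromatic_number_add_edge[of n "E(x:=False)" x]
    chromatic_number_mono[of "E(x:=False)" "E(x:=True)" n]
  by fastforce

lemma proper_colouring_drop_unused_colour:
  assumes f: "proper_colouring n E k f" and unused: "\<And>i. i < n \<Longrightarrow> f i \<noteq> c" and "c < k"
  shows "proper_colouring n E (k - 1) (\<lambda>i. if f i = k - 1 then c else f i)"
  unfolding proper_colouring_def
proof (intro conjI allI impI)
  fix i assume "i < n"
  then have "f i < k" "f i \<noteq> c" using f unused by (auto simp: proper_colouring_def)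
  then show "(if f i = k - 1 then c else f i) < k - 1" using \<open>c < k\<close> by auto
next
  fix i j assume "i < j \<and> j < n \<and> E (i, j)"
  then have "f i \<noteq> f j" "f i \<noteq> c" "f j \<noteq> c" using f unused by (auto simp: proper_colouring_def)
  then show "(if f i = k - 1 then c else f i) \<noteq> (if f j = k - 1 then c else f j)" by auto
qed

definition adjacent :: "(nat \<times> nat \<Rightarrow> bool) \<Rightarrow> nat \<Rightarrow> nat \<Rightarrow> bool" where
  "adjacent E i j = (if i < j then E (i, j) else E (j, i))"

definition universal_vertex :: "nat \<Rightarrow> (nat \<times> nat \<Rightarrow> bool) \<Rightarrow> nat \<Rightarrow> bool" where
  "universal_vertex n E u \<longleftrightarrow> u < n \<and> (\<forall>x<n. x \<noteq> u \<longrightarrow> adjacent E u x)"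

lemma proper_colouring_adjacent:
  "proper_colouring n E k f \<Longrightarrow> i < n \<Longrightarrow> j < n \<Longrightarrow> i \<noteq> j \<Longrightarrow> adjacent E i j \<Longrightarrow> f i \<noteq> f j"
  unfolding proper_colouring_def adjacent_def by (metis linorder_neqE_nat)

lemma proper_colouring_universal_vertex:
  "proper_colouring n E k f \<Longrightarrow> universal_vertex n E u \<Longrightarrow> x < n \<Longrightarrow> x \<noteq> u \<Longrightarrow> f x \<noteq> f u"
  unfolding universal_vertex_def by (metis proper_colouring_adjacent)

lemma chromatic_number_delete_universal_edge:
  assumes "u < v" and u: "universal_vertex n E u" and v: "universal_vertex n E v"
  shows "chromatic_number n (E((u,v):=False)) + 1 = chromatic_number n E"
proof (rule antisym)
  define k where "k = chromatic_number n E"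
  obtain f where f: "proper_colouring n E k f"
    unfolding k_def using chromatic_number_colouring by blast
  have "u < n" "v < n" using u v by (auto simp: universal_vertex_def)
  \<comment> \<open>\<open>v\<close> may take the colour of \<open>u\<close>; the colour of \<open>v\<close>, used by \<open>v\<close> alone, becomes free\<close>
  define g where "g = f(v := f u)"
  have "proper_colouring n (E((u,v):=False)) k g"
    using f proper_colouring_universal_vertex[OF f u] proper_colouring_universal_vertex[OF f v]
      \<open>u < v\<close> \<open>u < n\<close>
    unfolding proper_colouring_def g_def by auto (metis order.strict_trans less_irrefl)
  moreover have "g i \<noteq> f v" if "i < n" for i
    using proper_colouring_universal_vertex[OF f v] proper_colouring_universal_vertex[OF f u]
      that \<open>u < v\<close> \<open>u < n\<close> by (auto simp: g_def)
  moreover have "f v < k" using f \<open>v < n\<close> by (simp add: proper_colouring_def)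
  ultimately have "chromatic_number n (E((u,v):=False)) \<le> k - 1"
    by (blast intro: chromatic_number_le proper_colouring_drop_unused_colour)
  then show "chromatic_number n (E((u,v):=False)) + 1 \<le> k"
    using \<open>f v < k\<close> by linarith
next
  have "chromatic_number n E \<le> chromatic_number n (E((u,v):=False, (u,v):=True))"
    by (rule chromatic_number_mono) simp
  also have "\<dots> \<le> chromatic_number n (E((u,v):=False)) + 1"
    by (rule chromatic_number_add_edge)
  finally show "chromatic_number n E \<le> chromatic_number n (E((u,v):=False)) + 1" .
qed

section \<open>Concentration of the chromatic number\<close>

lemma finite_vertex_pairs: "finite (vertex_pairs n)"
  by (rule finite_subset[of _ "{..<n} \<times> {..<n}"]) (auto simp: vertex_pairs_def)

lemma card_vertex_pairs_le: "card (vertex_pairs n) \<le> n\<^sup>2"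
proof -
  have "card (vertex_pairs n) \<le> card ({..<n} \<times> {..<n})"
    by (rule card_mono) (auto simp: vertex_pairs_def)
  then show ?thesis by (simp add: power2_eq_square)
qed

lemma finite_set_pmf_Gnp: "finite (set_pmf (Gnp n p))"
  unfolding Gnp_def by (rule finite_set_pmf_Pi_bernoulli[OF finite_vertex_pairs])

lemma variance_Gnp_le:
  fixes f :: "(nat \<times> nat \<Rightarrow> bool) \<Rightarrow> real"
  assumes p: "0 \<le> p" "p \<le> 1"
    and "\<And>E x. x \<in> vertex_pairs n \<Longrightarrow> \<bar>f (E(x:=True)) - f (E(x:=False))\<bar> \<le> c"
  shows "measure_pmf.variance (Gnp n p) f \<le> real n ^ 2 * (1 - p) * c\<^sup>2"
proof -
  have "measure_pmf.variance (Gnp n p) f \<le> real (card (vertex_pairs n)) * (p * (1 - p)) * c\<^sup>2"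
    unfolding Gnp_def using assms by (intro variance_Pi_pmf_bernoulli_le finite_vertex_pairs)
  also have "\<dots> \<le> real n ^ 2 * (1 - p) * c\<^sup>2"
    using card_vertex_pairs_le[of n] p
    by (intro mult_right_mono mult_mono) (auto simp: mult_left_le_one_le simp flip: of_nat_power)
  finally show ?thesis .
qed

lemma prob_interval_around_expectation:
  fixes X :: "'a \<Rightarrow> nat" and L :: nat
  assumes "finite (set_pmf M)" "0 < L"
  defines "I \<equiv> nat \<lceil>measure_pmf.expectation M X - real L / 2\<rceil>"
  shows "1 - 4 * measure_pmf.variance M X / (real L)\<^sup>2 \<le> measure_pmf.prob M {x. X x \<in> {I..I + L}}"
proof -
  let ?m = "measure_pmf.expectation M X"
  have "?m - real L / 2 \<le> real I"
    unfolding I_def by linarith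
  moreover have "real k < ?m - real L / 2" if "k < I" for k
    using that unfolding I_def by (simp add: zless_nat_eq_int_zless less_ceiling_iff)
  ultimately have "{x. X x \<notin> {I..I + L}} \<subseteq> {x. real L / 2 \<le> \<bar>real (X x) - ?m\<bar>}"
    by (force simp: not_le)
  then have "measure_pmf.prob M {x. X x \<notin> {I..I + L}}
      \<le> measure_pmf.prob M {x. real L / 2 \<le> \<bar>real (X x) - ?m\<bar>}"
    by (intro measure_pmf.finite_measure_mono) auto
  also have "\<dots> \<le> measure_pmf.variance M X / (real L / 2)\<^sup>2"
    using measure_pmf.Chebyshev_inequality[where M = M and f = "\<lambda>x. real (X x)" and a = "real L / 2"] assms(1,2)
    by (simp add: integrable_measure_pmf_finite)
  finally show ?thesis
    using measure_pmf.prob_compl[of "{x. X x \<in> {I..I + L}}" M]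
    by (simp add: Compl_eq_Diff_UNIV[symmetric] set_diff_eq power_divide)
qed

lemma variance_chromatic_number_le:
  assumes "0 \<le> p" "p \<le> 1"
  shows "measure_pmf.variance (Gnp n p) (\<lambda>E. real (chromatic_number n E)) \<le> real n ^ 2 * (1 - p)"
  using variance_Gnp_le[OF assms, of n "\<lambda>E. real (chromatic_number n E)" 1]
  by (simp add: chromatic_number_flip_edge)

lemma chi_prob_window_around_expectation_ge:
  fixes \<omega> :: real
  assumes p: "0 \<le> p" "p \<le> 1" and \<omega>: "2 \<le> \<omega> * (real n * sqrt (1 - p))"
  defines "L \<equiv> nat \<lfloor>\<omega> * real n * sqrt (1 - p)\<rfloor>"
  defines "I \<equiv> nat \<lceil>measure_pmf.expectation (Gnp n p) (chromatic_number n) - real L / 2\<rceil>"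
  shows "1 - 16 / \<omega>\<^sup>2 \<le> chi_prob n p {I .. I + L}"
proof -
  define z where "z = real n * sqrt (1 - p)"
  have z2: "z\<^sup>2 = real n ^ 2 * (1 - p)" using p by (simp add: z_def power_mult_distrib)
  have \<omega>z: "2 \<le> \<omega> * z" using \<omega> by (simp add: z_def)
  have "\<omega> * z / 2 \<le> real L"
    using \<omega> by (simp add: L_def z_def mult.assoc) linarith
  then have "0 < real L" "(\<omega> * z / 2)\<^sup>2 \<le> (real L)\<^sup>2"
    using \<omega>z by (auto intro: power_mono)
  then have L: "0 < L" "(\<omega> * z / 2)\<^sup>2 \<le> (real L)\<^sup>2" by simp_all
  have "\<omega> \<noteq> 0" "z \<noteq> 0" using \<omega>z by auto
  then have "1 - 16 / \<omega>\<^sup>2 = 1 - 4 * z\<^sup>2 / (\<omega> * z / 2)\<^sup>2"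
    by (simp add: field_simps power2_eq_square)
  also have "\<dots> \<le> 1 - 4 * z\<^sup>2 / (real L)\<^sup>2"
    using \<omega>z L by (intro diff_left_mono divide_left_mono mult_pos_pos) auto
  also have "\<dots> \<le> 1 - 4 * measure_pmf.variance (Gnp n p) (chromatic_number n) / (real L)\<^sup>2"
    using variance_chromatic_number_le[OF p, of n] z2 by (intro diff_left_mono divide_right_mono) auto
  also have "\<dots> \<le> chi_prob n p {I .. I + L}"
    unfolding chi_prob_def I_def by (rule prob_interval_around_expectation[OF finite_set_pmf_Gnp L(1)])
  finally show ?thesis .
qed

lemma chromatic_number_concentration:
  assumes p: "\<And>n. 0 \<le> p n \<and> p n \<le> 1"
    and nq: "filterlim (\<lambda>n. real n ^ 2 * (1 - p n)) at_top sequentially"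
    and \<omega>: "filterlim \<omega> at_top sequentially"
  shows "\<exists>I :: nat \<Rightarrow> nat.
           (\<lambda>n. chi_prob n (p n) {I n .. I n + nat \<lfloor>\<omega> n * real n * sqrt (1 - p n)\<rfloor>}) \<longlonglongrightarrow> 1"
proof -
  define L where "L n = nat \<lfloor>\<omega> n * real n * sqrt (1 - p n)\<rfloor>" for n
  define I where "I n = nat \<lceil>measure_pmf.expectation (Gnp n (p n)) (chromatic_number n)
                              - real (L n) / 2\<rceil>" for n
  have "real n * sqrt (1 - p n) = sqrt (real n ^ 2 * (1 - p n))" for n
    using p[of n] by (simp add: real_sqrt_mult)
  then have "filterlim (\<lambda>n. real n * sqrt (1 - p n)) at_top sequentially"
    using filterlim_compose[OF sqrt_at_top nq] by simp
  then have "filterlim (\<lambda>n. \<omega> n * (real n * sqrt (1 - p n))) at_top sequentially"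
    by (rule filterlim_at_top_mult_at_top[OF \<omega>])
  then have "\<forall>\<^sub>F n in sequentially. 2 \<le> \<omega> n * (real n * sqrt (1 - p n))"
    by (simp add: filterlim_at_top)
  then have lower: "\<forall>\<^sub>F n in sequentially. 1 - 16 / (\<omega> n)\<^sup>2 \<le> chi_prob n (p n) {I n .. I n + L n}"
  proof eventually_elim
    case (elim n)
    then show ?case
      unfolding L_def I_def using p[of n] by (intro chi_prob_window_around_expectation_ge) auto
  qed
  have "(\<lambda>n. 16 / (\<omega> n)\<^sup>2) \<longlonglongrightarrow> 0"
    by (intro tendsto_divide_0[OF tendsto_const] filterlim_at_top_imp_at_infinity
        filterlim_pow_at_top[OF _ \<omega>]) simp
  then have "(\<lambda>n. 1 - 16 / (\<omega> n)\<^sup>2) \<longlonglongrightarrow> 1 - 0"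
    by (rule tendsto_diff[OF tendsto_const])
  moreover have "\<forall>\<^sub>F n in sequentially. chi_prob n (p n) {I n .. I n + L n} \<le> 1"
    by (simp add: chi_prob_def)
  ultimately have "(\<lambda>n. chi_prob n (p n) {I n .. I n + L n}) \<longlonglongrightarrow> 1"
    using tendsto_sandwich[OF lower _ _ tendsto_const] by simp
  then show ?thesis unfolding L_def by blast
qed

section \<open>Counting matchings\<close>

definition pairs_within :: "nat set \<Rightarrow> (nat \<times> nat) set" where
  "pairs_within S = {(i, j). i < j \<and> i \<in> S \<and> j \<in> S}"

definition is_matching :: "(nat \<times> nat) set \<Rightarrow> bool" where
  "is_matching A \<longleftrightarrow> (\<forall>a\<in>A. \<forall>b\<in>A. a \<noteq> b \<longrightarrow> {fst a, snd a} \<inter> {fst b, snd b} = {})"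

definition matchings :: "nat set \<Rightarrow> (nat \<times> nat) set set" where
  "matchings S = {A. A \<subseteq> pairs_within S \<and> is_matching A}"

definition matchings_of_size :: "nat set \<Rightarrow> nat \<Rightarrow> (nat \<times> nat) set set" where
  "matchings_of_size S k = {A \<in> matchings S. card A = k}"

fun matching_count :: "nat \<Rightarrow> nat \<Rightarrow> nat" where
  "matching_count w 0 = 1"
| "matching_count 0 (Suc k) = 0"
| "matching_count (Suc w) (Suc k) = matching_count w (Suc k) + w * matching_count (w - 1) k"

lemma finite_pairs_within: "finite S \<Longrightarrow> finite (pairs_within S)"
  by (rule finite_subset[of _ "S \<times> S"]) (auto simp: pairs_within_def)

lemma finite_matchings_of_size: "finite S \<Longrightarrow> finite (matchings_of_size S k)"
  by (rule finite_subset[of _ "Pow (pairs_within S)"]) (auto simp: matchings_of_size_def matchings_def finite_pairs_within)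

lemma matchings_of_size_0: "finite S \<Longrightarrow> matchings_of_size S 0 = {{}}"
proof -
  assume S: "finite S"
  have "A = {}" if "A \<subseteq> pairs_within S" "card A = 0" for A
    using that finite_subset[OF that(1) finite_pairs_within[OF S]] by simp
  then show ?thesis by (auto simp: matchings_of_size_def matchings_def is_matching_def)
qed

lemma matchings_of_size_empty_Suc: "matchings_of_size {} (Suc k) = {}"
  by (auto simp: matchings_of_size_def matchings_def pairs_within_def)

lemma matchings_of_size_mono: "S \<subseteq> T \<Longrightarrow> matchings_of_size S k \<subseteq> matchings_of_size T k"
  by (auto simp: matchings_of_size_def matchings_def pairs_within_def)

lemma insert_edge_matchings_of_size:
  assumes "finite S" "x \<notin> S" "\<forall>y\<in>S. y < x" "y \<in> S" "B \<in> matchings_of_size (S - {y}) k"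
  shows "insert (y, x) B \<in> matchings_of_size (insert x S) (Suc k)"
proof -
  have B: "B \<subseteq> pairs_within (S - {y})" "is_matching B" "card B = k"
    using assms(5) by (auto simp: matchings_of_size_def matchings_def)
  have "finite B"
    using B(1) finite_pairs_within[of "S - {y}"] assms(1) finite_subset by blast
  moreover have "{fst c, snd c} \<inter> {y, x} = {}" if "c \<in> B" for c
    using B(1) that assms(2) by (auto simp: pairs_within_def)
  moreover have "(y, x) \<notin> B" using B(1) by (auto simp: pairs_within_def)
  ultimately show ?thesis
    using B assms(3,4) unfolding matchings_of_size_def matchings_def is_matching_def
    by (auto simp: pairs_within_def)
qed

lemma matching_edge_at_max:
  assumes "y < x" "(y, x) \<in> A" "A \<in> matchings_of_size (insert x S) (Suc k)"
  shows "y \<in> S - {x}" and "A - {(y, x)} \<in> matchings_of_size (S - {y}) k"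
proof -
  have A: "A \<subseteq> pairs_within (insert x S)" "is_matching A" "card A = Suc k"
    using assms(3) by (auto simp: matchings_of_size_def matchings_def)
  show "y \<in> S - {x}" using A(1) assms(1,2) by (auto simp: pairs_within_def)
  have "finite A" using A(3) card.infinite by fastforce
  moreover have "{i, j} \<inter> {y, x} = {}" if "(i, j) \<in> A - {(y, x)}" for i j
    using A(2) assms(2) that unfolding is_matching_def by force
  ultimately show "A - {(y, x)} \<in> matchings_of_size (S - {y}) k"
    using A assms(2) unfolding matchings_of_size_def matchings_def is_matching_def
    by (auto simp: pairs_within_def)
qed

lemma matchings_of_size_insert_max:
  assumes "finite S" "x \<notin> S" "\<forall>y\<in>S. y < x"
  shows "matchings_of_size (insert x S) (Suc k) =
    matchings_of_size S (Suc k) \<union> (\<Union>y\<in>S. insert (y, x) ` matchings_of_size (S - {y}) k)"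
proof (intro equalityI subsetI)
  fix A assume A: "A \<in> matchings_of_size (insert x S) (Suc k)"
  show "A \<in> matchings_of_size S (Suc k) \<union> (\<Union>y\<in>S. insert (y, x) ` matchings_of_size (S - {y}) k)"
  proof (cases "\<exists>y. (y, x) \<in> A")
    case False
    \<comment> \<open>\<open>x\<close> is the largest vertex, so it could only be the second component of an edge\<close>
    then have "A \<subseteq> pairs_within S"
      using A assms(2,3) by (fastforce simp: matchings_of_size_def matchings_def pairs_within_def)
    then show ?thesis using A by (auto simp: matchings_of_size_def matchings_def)
  next
    case True
    then obtain y where y: "(y, x) \<in> A" by blast
    then have "y < x" using A by (auto simp: matchings_of_size_def matchings_def pairs_within_def)
    then have "y \<in> S" "A = insert (y, x) (A - {(y, x)})" "A - {(y, x)} \<in> matchings_of_size (S - {y}) k"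
      using matching_edge_at_max[OF _ y A] y by auto
    then show ?thesis by blast
  qed
next
  fix A
  assume "A \<in> matchings_of_size S (Suc k) \<union> (\<Union>y\<in>S. insert (y, x) ` matchings_of_size (S - {y}) k)"
  then show "A \<in> matchings_of_size (insert x S) (Suc k)"
    using matchings_of_size_mono[of S "insert x S"] insert_edge_matchings_of_size[OF assms] by blast
qed

lemma card_matchings_of_size_insert_max:
  assumes "finite S" "x \<notin> S" "\<forall>y\<in>S. y < x"
  shows "card (matchings_of_size (insert x S) (Suc k)) =
    card (matchings_of_size S (Suc k)) + (\<Sum>y\<in>S. card (matchings_of_size (S - {y}) k))"
proof -
  have avoids_x: "(y, x) \<notin> B" if "B \<in> matchings_of_size T j" "x \<notin> T" for y B T j
    using that by (auto simp: matchings_of_size_def matchings_def pairs_within_def)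
  have fin: "finite (matchings_of_size T j)" if "T \<subseteq> S" for T j
    using finite_matchings_of_size finite_subset[OF that assms(1)] by blast
  have inj: "inj_on (insert (y, x)) (matchings_of_size (S - {y}) k)" for y
    using avoids_x[of _ "S - {y}"] assms(2) by (intro inj_onI) (metis Diff_iff insert_ident)
  have "card (matchings_of_size (insert x S) (Suc k)) =
      card (matchings_of_size S (Suc k)) + card (\<Union>y\<in>S. insert (y, x) ` matchings_of_size (S - {y}) k)"
    unfolding matchings_of_size_insert_max[OF assms]
    using avoids_x[of _ S] assms(1,2) fin by (intro card_Un_disjoint) auto
  also have "card (\<Union>y\<in>S. insert (y, x) ` matchings_of_size (S - {y}) k)
      = (\<Sum>y\<in>S. card (insert (y, x) ` matchings_of_size (S - {y}) k))"
  proof (intro card_UN_disjoint ballI impI)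
    fix y j :: nat assume "y \<noteq> j"
    moreover have "(j, x) \<notin> A" if "A \<in> matchings_of_size (S - {y}) k" for A
      using avoids_x[OF that] assms(2) by blast
    ultimately have "(j, x) \<notin> insert (y, x) A" if "A \<in> matchings_of_size (S - {y}) k" for A
      using that by simp
    then have "insert (y, x) A \<noteq> insert (j, x) B" if "A \<in> matchings_of_size (S - {y}) k" for A B
      using that by blast
    then show "insert (y, x) ` matchings_of_size (S - {y}) k \<inter> insert (j, x) ` matchings_of_size (S - {j}) k = {}"
      by blast
  qed (use assms(1) fin in auto)
  also have "\<dots> = (\<Sum>y\<in>S. card (matchings_of_size (S - {y}) k))"
    using inj by (simp add: card_image)
  finally show ?thesis .
qed

lemma card_matchings_of_size: "finite S \<Longrightarrow> card (matchings_of_size S k) = matching_count (card S) k"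
proof (induction "card S" arbitrary: S k rule: less_induct)
  case less
  consider "k = 0" | "S = {}" "k \<noteq> 0" | k' where "k = Suc k'" "S \<noteq> {}"
    using not0_implies_Suc by blast
  then show ?case
  proof cases
    case 1
    then show ?thesis using matchings_of_size_0[OF less.prems] by simp
  next
    case 2
    then obtain k' where "k = Suc k'" using not0_implies_Suc by blast
    then show ?thesis using 2(1) by (simp add: matchings_of_size_empty_Suc)
  next
    case 3
    define x where "x = Max S"
    define S' where "S' = S - {x}"
    have "x \<in> S" using Max_in[OF less.prems 3(2)] by (simp add: x_def)
    then have S: "S = insert x S'" "finite S'" "x \<notin> S'" "\<forall>y\<in>S'. y < x"
      using less.prems Max_ge[OF less.prems]
        by (auto simp: x_def S'_def order.not_eq_order_implies_strict)
    then have card_S: "card S = Suc (card S')" by simp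
    have "card (matchings_of_size S k) =
        card (matchings_of_size S' (Suc k')) + (\<Sum>y\<in>S'. card (matchings_of_size (S' - {y}) k'))"
      unfolding 3(1) S(1) by (rule card_matchings_of_size_insert_max[OF S(2-4)])
    also have "\<dots> = matching_count (card S') (Suc k') + (\<Sum>y\<in>S'. matching_count (card S' - 1) k')"
    proof -
      have IH: "card (matchings_of_size T j) = matching_count (card T) j" if "T \<subseteq> S'" for T j
        using that S(2) card_S card_mono[OF S(2) that] finite_subset[OF that S(2)]
        by (intro less.hyps) simp_all
      show ?thesis
        using IH[of S'] IH[of "S' - {_}"] S(2) by (simp add: card_Diff_singleton)
    qed
    also have "\<dots> = matching_count (card S) k"
      using 3(1) card_S by simp
    finally show ?thesis .
  qed
qed

lemma matching_count_eq_0: "w < 2 * k \<Longrightarrow> matching_count w k = 0"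
proof (induction w k rule: matching_count.induct)
  case (3 w k)
  have a: "matching_count w (Suc k) = 0" using 3 by simp
  have b: "w * matching_count (w - 1) k = 0"
  proof (cases "w = 0")
    case False
    then have "w - 1 < 2 * k" using "3.prems" by simp
    then show ?thesis using "3.IH"(2) by simp
  qed simp
  show ?case using a b by simp
qed auto

lemma matching_count_closed_form:
  "2 * k \<le> w \<Longrightarrow> real (matching_count w k) * (fact k * 2 ^ k * fact (w - 2 * k)) = fact w"
proof (induction w k rule: matching_count.induct)
  case (3 w k)
  let ?m = "\<lambda>w k. real (matching_count w k)"
  have fk: "fact (Suc k) = real (Suc k) * (fact k :: real)" by (rule fact_Suc)
  show ?case
  proof (cases "2 * k + 2 \<le> w")
    case True
    define a where "a = w - 2 * k - 2"
    have w: "w = a + 2 * k + 2" "w - 2 * Suc k = a" "w - 1 - 2 * k = Suc a" "Suc w - 2 * Suc k = Suc a"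
      using True by (simp_all add: a_def)
    have IH: "?m w (Suc k) * (fact (Suc k) * 2 ^ Suc k * fact a) = fact w"
      "?m (w - 1) k * (fact k * 2 ^ k * fact (Suc a)) = fact (w - 1)"
      using "3.IH" True unfolding w(2,3) by simp_all
    have fw: "fact w = real w * fact (w - 1)" using w by (simp add: fact_reduce)
    have fa: "fact (Suc a) = real (Suc a) * (fact a :: real)" by (rule fact_Suc)
    have "?m (Suc w) (Suc k) * (fact (Suc k) * 2 ^ Suc k * fact (Suc w - 2 * Suc k))
        = (?m w (Suc k) + real w * ?m (w - 1) k) * (fact (Suc k) * 2 ^ Suc k * fact (Suc a))"
      unfolding w(4) by simp
    also have "\<dots> = (?m w (Suc k) * (fact (Suc k) * 2 ^ Suc k * fact a)) * real (Suc a)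
        + real w * (?m (w - 1) k * (fact k * 2 ^ k * fact (Suc a))) * (2 * real (Suc k))"
      unfolding fa fk power_Suc by (simp only: algebra_simps)
    also have "\<dots> = fact w * real (Suc a) + real w * fact (w - 1) * (2 * real (Suc k))"
      unfolding IH by simp
    also have "\<dots> = fact (Suc w)" unfolding fw using w(1) by (simp add: fact_Suc algebra_simps)
    finally show ?thesis .
  next
    case False
    then have w: "w = 2 * k + 1" using "3.prems" by simp
    have IH: "?m (w - 1) k * (fact k * 2 ^ k) = fact (w - 1)"
      using "3.IH"(2) w by simp
    have "matching_count w (Suc k) = 0" by (rule matching_count_eq_0) (use w in simp)
    moreover have "Suc w - 2 * Suc k = 0" using w by simp
    ultimately have "?m (Suc w) (Suc k) * (fact (Suc k) * 2 ^ Suc k * fact (Suc w - 2 * Suc k))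
        = real w * (?m (w - 1) k * (fact k * 2 ^ k)) * (2 * real (Suc k))"
      unfolding fk power_Suc
      by (simp only: matching_count.simps of_nat_add of_nat_mult fact_0 algebra_simps)
    also have "\<dots> = real w * fact (w - 1) * (2 * real (Suc k))" unfolding IH ..
    also have "\<dots> = fact (Suc w)" using w by (simp add: fact_Suc algebra_simps)
    finally show ?thesis .
  qed
qed simp_all

lemma matching_count_Suc_ratio:
  "2 * real (Suc k) * real (matching_count w (Suc k))
     = real (w - 2 * k) * real (w - 2 * k - 1) * real (matching_count w k)"
proof (cases "2 * k + 2 \<le> w")
  case True
  let ?m = "\<lambda>k. real (matching_count w k)"
  define a where "a = w - 2 * k - 2"
  have w: "w - 2 * Suc k = a" "w - 2 * k = Suc (Suc a)" using True by (simp_all add: a_def)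
  have "?m (Suc k) * (fact (Suc k) * 2 ^ Suc k * fact a) = ?m k * (fact k * 2 ^ k * fact (Suc (Suc a)))"
    using matching_count_closed_form[of "Suc k" w] matching_count_closed_form[of k w] True
    unfolding w by simp
  then have "(2 * real (Suc k) * ?m (Suc k)) * (fact k * 2 ^ k * fact a)
      = (real (Suc (Suc a)) * real (Suc a) * ?m k) * (fact k * 2 ^ k * fact a)"
    by (simp add: fact_Suc algebra_simps)
  then show ?thesis unfolding w by simp
next
  case False
  then have "w - 2 * k = 0 \<or> w - 2 * k - 1 = 0" by auto
  moreover have "matching_count w (Suc k) = 0" by (rule matching_count_eq_0) (use False in simp)
  ultimately show ?thesis by auto
qed

lemma is_matching_disjoint:
  assumes "is_matching A" "(u, v) \<in> A" "(i, j) \<in> A" "(i, j) \<noteq> (u, v)"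
  shows "i \<noteq> u \<and> i \<noteq> v \<and> j \<noteq> u \<and> j \<noteq> v"
  using assms unfolding is_matching_def by fastforce

lemma finite_matchings: "finite S \<Longrightarrow> finite (matchings S)"
  by (rule finite_subset[of _ "Pow (pairs_within S)"]) (auto simp: matchings_def finite_pairs_within)

lemma matchings_finite: "finite S \<Longrightarrow> A \<in> matchings S \<Longrightarrow> finite A"
  using finite_pairs_within finite_subset by (auto simp: matchings_def)

lemma card_matching_le: "finite S \<Longrightarrow> A \<in> matchings S \<Longrightarrow> card A \<le> card S"
proof -
  assume "finite S" "A \<in> matchings S"
  moreover from this have "inj_on fst A" "fst ` A \<subseteq> S"
    by (auto simp: matchings_def is_matching_def pairs_within_def intro!: inj_onI)
  ultimately show ?thesis using card_inj_on_le by blast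
qed

lemma sum_matchings_card:
  fixes g :: "nat \<Rightarrow> real"
  assumes "finite S"
  shows "(\<Sum>A\<in>matchings S. g (card A)) = (\<Sum>k\<le>card S. real (matching_count (card S) k) * g k)"
proof -
  have "(\<Sum>A\<in>matchings S. g (card A)) = (\<Sum>k\<le>card S. \<Sum>A\<in>matchings_of_size S k. g (card A))"
    unfolding matchings_of_size_def
    by (rule sum.group[symmetric]) (use finite_matchings card_matching_le assms in auto)
  also have "\<dots> = (\<Sum>k\<le>card S. real (matching_count (card S) k) * g k)"
    using card_matchings_of_size[OF assms] by (intro sum.cong) (auto simp: matchings_of_size_def)
  finally show ?thesis .
qed

section \<open>Anti-concentration of the matching size\<close>

text \<open>Up to normalisation, the law of the size of the deleted matching within a fibre
  (with \<open>r = q / p\<close>).\<close>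

definition matching_weight :: "nat \<Rightarrow> real \<Rightarrow> nat \<Rightarrow> real" where
  "matching_weight w r k = real (matching_count w k) * r ^ k"

lemma matching_weight_nonneg: "0 \<le> r \<Longrightarrow> 0 \<le> matching_weight w r k"
  by (simp add: matching_weight_def)

lemma matching_weight_0 [simp]: "matching_weight w r 0 = 1"
  by (simp add: matching_weight_def)

lemma matching_weight_eq_0: "w < 2 * k \<Longrightarrow> matching_weight w r k = 0"
  by (simp add: matching_weight_def matching_count_eq_0)

lemma matching_weight_Suc_ratio:
  "2 * real (Suc k) * matching_weight w r (Suc k) =
     real (w - 2 * k) * real (w - 2 * k - 1) * r * matching_weight w r k"
proof -
  have "2 * real (Suc k) * matching_weight w r (Suc k) =
      (2 * real (Suc k) * real (matching_count w (Suc k))) * (r * r ^ k)"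
    by (simp add: matching_weight_def)
  also have "\<dots> = real (w - 2 * k) * real (w - 2 * k - 1) * r * matching_weight w r k"
    unfolding matching_count_Suc_ratio by (simp add: matching_weight_def)
  finally show ?thesis .
qed

lemma le_sum_of_slow_growth:
  fixes a :: "nat \<Rightarrow> real" and s k :: nat
  assumes "1 \<le> s" "s \<le> k" "\<And>i. 0 \<le> a i"
    and growth: "\<And>j. j < s \<Longrightarrow> a (k - j) \<le> (1 + 1 / s) * a (k - Suc j)"
  shows "a k \<le> 4 / s * (\<Sum>i\<in>{k - s..<k}. a i)"
proof -
  have iterated: "a k \<le> (1 + 1 / s) ^ j * a (k - j)" if "j \<le> s" for j
    using that
  proof (induction j)
    case (Suc j)
    have "a k \<le> (1 + 1 / s) ^ j * a (k - j)"
      using Suc by simp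
    also have "\<dots> \<le> (1 + 1 / s) ^ j * ((1 + 1 / s) * a (k - Suc j))"
      using growth[of j] Suc.prems by (intro mult_left_mono) auto
    finally show ?case by (simp add: algebra_simps)
  qed simp
  have "(1 + 1 / real s) ^ s \<le> exp 1"
    using exp_ge_one_plus_x_over_n_power_n[of s 1] assms(1) by simp
  also have "\<dots> \<le> 4" using exp_le by simp
  finally have e: "(1 + 1 / real s) ^ s \<le> 4" .
  have "a k / 4 \<le> a i" if "i \<in> {k - s..<k}" for i
  proof -
    have "k - i \<le> s" "k - (k - i) = i" using that by auto
    then have "a k \<le> (1 + 1 / s) ^ (k - i) * a i"
      using iterated[of "k - i"] by simp
    also have "\<dots> \<le> 4 * a i"
      using that e assms(3)[of i]
      by (intro mult_right_mono order_trans[OF power_increasing e]) auto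
    finally show ?thesis by simp
  qed
  then have "real s * (a k / 4) \<le> (\<Sum>i\<in>{k - s..<k}. a i)"
    using sum_mono[of "{k - s..<k}" "\<lambda>_. a k / 4" a] assms(2) by simp
  then show ?thesis using assms(1) by (simp add: field_simps)
qed

lemma shifted_quadratic_le:
  fixes B S X :: real
  assumes S: "1 \<le> S" and B: "16 * S\<^sup>2 + 2 \<le> B" and X: "0 \<le> X" "X \<le> B + 2 * S"
  shows "X * (X - 1) \<le> (1 + 1 / (8 * S))\<^sup>2 * (B * (B - 1))"
proof -
  define u where "u = 1 / (8 * S)"
  have u: "0 < u" "u * (16 * S\<^sup>2) = 2 * S" using S by (auto simp: u_def power2_eq_square)
  have "0 \<le> S\<^sup>2" by simp
  then have B1: "0 \<le> B - 1" using B by linarith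
  have "u * (16 * S\<^sup>2) \<le> u * (B - 1)" using B u(1) by (intro mult_left_mono) auto
  then have X1: "X \<le> (1 + u) * B" "X - 1 \<le> (1 + u) * (B - 1)"
    using X u by (auto simp: algebra_simps)
  have "X * (X - 1) \<le> ((1 + u) * B) * ((1 + u) * (B - 1))"
  proof (cases "X \<le> 1")
    case True
    then have "X * (X - 1) \<le> 0" using X(1) by (simp add: mult_nonneg_nonpos)
    also have "0 \<le> ((1 + u) * B) * ((1 + u) * (B - 1))" using u(1) B1 by simp
    finally show ?thesis .
  next
    case False
    then show ?thesis using X1 u(1) B1 by (intro mult_mono) auto
  qed
  also have "\<dots> = (1 + u)\<^sup>2 * (B * (B - 1))" by (simp add: power2_eq_square)
  finally show ?thesis by (simp only: u_def)
qed

lemma ratio_bound_near_mode: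
  fixes B S X r K M :: real
  assumes S: "1 \<le> S" and B: "16 * S\<^sup>2 + 2 \<le> B" and K: "4 * S\<^sup>2 + S \<le> K"
    and r: "0 < r" and mode: "B * (B - 1) * r \<le> 2 * (K + 1)"
    and X: "0 \<le> X" "X \<le> B + 2 * S" and M: "K - S \<le> M"
  shows "X * (X - 1) * r \<le> 2 * (M + 1) * (1 + 1 / S)"
proof -
  define u where "u = 1 / (8 * S)"
  have u: "0 < u" "u \<le> 1 / 8" using S by (auto simp: u_def)
  have M0: "0 \<le> M + 1" using K M by (smt (verit) zero_le_power2)
  have KM: "K + 1 \<le> (1 + 2 * u) * (M + 1)"
  proof -
    have "4 * S * S \<le> K - S + 1" using K by (simp add: power2_eq_square)
    then have "S \<le> (K - S + 1) / (4 * S)" using S by (simp add: field_simps)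
    also have "(K - S + 1) / (4 * S) = 2 * u * (K - S + 1)" using S by (simp add: u_def)
    also have "\<dots> \<le> 2 * u * (M + 1)" using M u by (intro mult_left_mono) auto
    finally show ?thesis using M by (simp add: algebra_simps)
  qed
  have "5 * u + 2 * u\<^sup>2 \<le> 4"
    using u power_le_one[of u 2] by simp
  then have "u * (5 * u + 2 * u\<^sup>2) \<le> u * 4"
    using u(1) by (intro mult_left_mono) auto
  then have "(1 + u)\<^sup>2 * (1 + 2 * u) \<le> 1 + 8 * u"
    by (simp add: power2_eq_square algebra_simps)
  also have "1 + 8 * u = 1 + 1 / S" using S by (simp add: u_def)
  finally have growth: "(1 + u)\<^sup>2 * (1 + 2 * u) \<le> 1 + 1 / S" .
  have "X * (X - 1) * r \<le> (1 + u)\<^sup>2 * (B * (B - 1)) * r"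
    using mult_right_mono[OF shifted_quadratic_le[OF S B X]] r unfolding u_def by simp
  also have "\<dots> = (1 + u)\<^sup>2 * (B * (B - 1) * r)" by simp
  also have "\<dots> \<le> (1 + u)\<^sup>2 * (2 * ((1 + 2 * u) * (M + 1)))"
    using mode KM by (intro mult_left_mono) auto
  also have "\<dots> = ((1 + u)\<^sup>2 * (1 + 2 * u)) * (2 * (M + 1))"
    by (simp add: algebra_simps)
  also have "\<dots> \<le> (1 + 1 / S) * (2 * (M + 1))"
    using growth M0 by (intro mult_right_mono) auto
  finally show ?thesis by (simp add: algebra_simps)
qed

lemma matching_weight_mode_ratio:
  assumes "0 \<le> r" and mode: "\<And>j. matching_weight w r j \<le> matching_weight w r k"
  shows "real (w - 2 * k) * (real (w - 2 * k) - 1) * r \<le> 2 * (real k + 1)"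
proof (rule mult_right_le_imp_le)
  have "real (w - 2 * k) * (real (w - 2 * k) - 1) * r * matching_weight w r k
      = 2 * real (Suc k) * matching_weight w r (Suc k)"
    unfolding matching_weight_Suc_ratio by (cases "w - 2 * k") auto
  also have "\<dots> = 2 * (real k + 1) * matching_weight w r (Suc k)" by simp
  also have "\<dots> \<le> 2 * (real k + 1) * matching_weight w r k"
    by (intro mult_left_mono mode) simp
  finally show "real (w - 2 * k) * (real (w - 2 * k) - 1) * r * matching_weight w r k
      \<le> 2 * (real k + 1) * matching_weight w r k" .
  show "0 < matching_weight w r k" using mode[of 0] by simp
qed

context
  fixes s w k :: nat and r :: real
  assumes r: "0 < r" and s: "1 \<le> s"
    and w_large: "2 * r * (16 * real s ^ 2 + 3) ^ 2 < real w" "32 * real s ^ 2 + 2 \<le> real w"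
      "8 * real s ^ 2 + 2 * real s + 2 \<le> (real w / 2) * (real w / 2 - 1) * r"
    and mode: "\<And>j. matching_weight w r j \<le> matching_weight w r k"
begin

lemma matching_weight_mode_le: "2 * k \<le> w"
  using mode[of 0] matching_weight_eq_0[of w k r] by (cases "w < 2 * k") auto

lemma matching_weight_mode_gap: "16 * real s ^ 2 + 2 \<le> real (w - 2 * k)"
proof -
  define b where "b = real (w - 2 * k)"
  have w: "real w = b + 2 * real k" using matching_weight_mode_le by (simp add: b_def)
  have "16 * real s ^ 2 + 1 < b"
  proof (cases k)
    case 0
    then show ?thesis using w w_large(2) zero_le_power2[of "real s"] by (simp only: of_nat_0)
  next
    case (Suc k')
    have "2 * real k * matching_weight w r k = (b + 2) * (b + 1) * r * matching_weight w r k'"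
      using matching_weight_Suc_ratio[of k' w r] Suc matching_weight_mode_le
      by (simp add: b_def Suc_diff_le of_nat_diff algebra_simps)
    also have "\<dots> \<le> (b + 2) * (b + 1) * r * matching_weight w r k"
      using mode[of k'] r by (intro mult_left_mono) (auto simp: b_def)
    finally have "2 * real k \<le> (b + 2) * (b + 1) * r"
      using mode[of 0] by simp
    also have "\<dots> \<le> (b + 2) ^ 2 * r"
      using r by (intro mult_right_mono) (auto simp: power2_eq_square b_def)
    finally have k: "2 * real k \<le> (b + 2) ^ 2 * r" .
    show ?thesis
    proof (cases "real w \<le> 4 * real k")
      case True
      then have "(16 * real s ^ 2 + 3) ^ 2 * r < (b + 2) ^ 2 * r"
        using k w_large(1) by (simp add: algebra_simps)
      then have "(16 * real s ^ 2 + 3) ^ 2 < (b + 2) ^ 2" using r by simp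
      then have "16 * real s ^ 2 + 3 < b + 2"
        by (rule power_less_imp_less_base) (simp add: b_def)
      then show ?thesis by simp
    next
      case False
      then show ?thesis using w w_large(2) by simp
    qed
  qed
  then have "real (16 * s ^ 2 + 1) < real (w - 2 * k)" unfolding b_def by simp
  then have "16 * s ^ 2 + 2 \<le> w - 2 * k" unfolding of_nat_less_iff by simp
  then have "real (16 * s ^ 2 + 2) \<le> real (w - 2 * k)" unfolding of_nat_le_iff .
  then show ?thesis by simp
qed

lemma matching_weight_mode_large: "4 * real s ^ 2 + real s \<le> real k"
proof -
  define b where "b = real (w - 2 * k)"
  have w: "real w = b + 2 * real k" using matching_weight_mode_le by (simp add: b_def)
  have ratio: "b * (b - 1) * r \<le> 2 * (real k + 1)"
    using matching_weight_mode_ratio[OF _ mode] r by (simp add: b_def)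
  show ?thesis
  proof (cases "real w / 2 \<le> b")
    case True
    have "1 \<le> real s ^ 2" using s by simp
    then have "4 \<le> real w" using w_large(2) by linarith
    then have "(real w / 2) * (real w / 2 - 1) * r \<le> b * (b - 1) * r"
      using True r by (intro mult_right_mono mult_mono) auto
    then show ?thesis using w_large(3) ratio by simp
  next
    case False
    then have "real w / 4 < real k" using w by simp
    moreover have "real s \<le> real s ^ 2" using s by (simp add: power2_eq_square)
    ultimately show ?thesis using w_large(2) by linarith
  qed
qed

lemma matching_weight_growth_below_mode:
  assumes "j < s"
  shows "matching_weight w r (k - j) \<le> (1 + 1 / s) * matching_weight w r (k - Suc j)"
proof -
  define m where "m = k - Suc j"
  have "real s \<le> real k"
    using matching_weight_mode_large by (smt (verit) zero_le_power2)
  then have m: "k - j = Suc m" "real (w - 2 * m) = real (w - 2 * k) + 2 * real (Suc j)"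
    using assms matching_weight_mode_le by (auto simp: m_def of_nat_diff)
  have "real (w - 2 * m) * (real (w - 2 * m) - 1) * r \<le> 2 * (real m + 1) * (1 + 1 / s)"
  proof (rule ratio_bound_near_mode)
    show "real (w - 2 * k) * (real (w - 2 * k) - 1) * r \<le> 2 * (real k + 1)"
      using matching_weight_mode_ratio[OF _ mode] r by simp
    show "real k - real s \<le> real m"
      using assms \<open>real s \<le> real k\<close> by (simp add: m_def of_nat_diff)
  qed (use s r assms m matching_weight_mode_gap matching_weight_mode_large in auto)
  then have bound: "real (w - 2 * m) * (real (w - 2 * m) - 1) * r * matching_weight w r m
      \<le> 2 * (real m + 1) * (1 + 1 / s) * matching_weight w r m"
    using matching_weight_nonneg[of r w m] r by (intro mult_right_mono) auto
  have X: "real (w - 2 * m) * real (w - 2 * m - 1) = real (w - 2 * m) * (real (w - 2 * m) - 1)"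
    by (cases "w - 2 * m") auto
  have "2 * (real m + 1) * matching_weight w r (Suc m) = 2 * real (Suc m) * matching_weight w r (Suc m)"
    by simp
  also have "\<dots> = real (w - 2 * m) * (real (w - 2 * m) - 1) * r * matching_weight w r m"
    by (simp only: matching_weight_Suc_ratio X)
  also note bound
  also have "2 * (real m + 1) * (1 + 1 / s) * matching_weight w r m
      = 2 * (real m + 1) * ((1 + 1 / s) * matching_weight w r m)" by (simp only: mult.assoc)
  finally have "matching_weight w r (Suc m) \<le> (1 + 1 / s) * matching_weight w r m"
    by (rule mult_left_le_imp_le) simp
  then show ?thesis using m(1) by (simp add: m_def)
qed

end

lemma matching_weight_le_sum:
  fixes s w k :: nat and r :: real
  assumes "0 < r" "1 \<le> s"
    and "2 * r * (16 * real s ^ 2 + 3) ^ 2 < real w" "32 * real s ^ 2 + 2 \<le> real w"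
      "8 * real s ^ 2 + 2 * real s + 2 \<le> (real w / 2) * (real w / 2 - 1) * r"
  shows "matching_weight w r k \<le> 4 / s * (\<Sum>j\<le>w. matching_weight w r j)"
proof -
  have "Max (matching_weight w r ` {..w}) \<in> matching_weight w r ` {..w}"
    by (intro Max_in) auto
  then obtain k0 where "k0 \<le> w" and max: "matching_weight w r k0 = Max (matching_weight w r ` {..w})"
    by (metis atMost_iff imageE)
  then have k0: "matching_weight w r j \<le> matching_weight w r k0" if "j \<le> w" for j
    using that by simp
  have mode: "matching_weight w r j \<le> matching_weight w r k0" for j
    using k0[of j] k0[of 0] matching_weight_eq_0[of w j r] by (cases "j \<le> w") auto
  note mode_facts = matching_weight_mode_large[OF assms mode] matching_weight_growth_below_mode[OF assms mode]
  have "real s \<le> real k0"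
    using mode_facts(1) by (smt (verit) zero_le_power2)
  then have "matching_weight w r k0 \<le> 4 / s * (\<Sum>j\<in>{k0 - s..<k0}. matching_weight w r j)"
    using assms(1,2) by (intro le_sum_of_slow_growth mode_facts(2) matching_weight_nonneg) auto
  also have "\<dots> \<le> 4 / s * (\<Sum>j\<le>w. matching_weight w r j)"
    using \<open>k0 \<le> w\<close> assms(1)
    by (intro mult_left_mono sum_mono2 matching_weight_nonneg) auto
  finally show ?thesis using mode[of k] by simp
qed

lemma sum_matchings_card_in_le:
  fixes s :: nat and r :: real
  assumes "finite S" "finite K" "0 < r" "1 \<le> s"
    and "2 * r * (16 * real s ^ 2 + 3) ^ 2 < real (card S)" "32 * real s ^ 2 + 2 \<le> real (card S)"
      "8 * real s ^ 2 + 2 * real s + 2 \<le> (real (card S) / 2) * (real (card S) / 2 - 1) * r"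
  shows "(\<Sum>A\<in>matchings S. r ^ card A * indicator K (card A))
           \<le> real (card K) * (4 / s) * (\<Sum>A\<in>matchings S. r ^ card A)"
proof -
  define w where "w = card S"
  define total where "total = (\<Sum>j\<le>w. matching_weight w r j)"
  have "0 \<le> 4 / s * total"
    using assms(3) matching_weight_nonneg[of r w] by (simp add: total_def sum_nonneg)
  have "(\<Sum>A\<in>matchings S. r ^ card A * indicator K (card A))
      = (\<Sum>k\<le>w. real (matching_count w k) * (r ^ k * indicator K k))"
    using sum_matchings_card[OF assms(1), of "\<lambda>k. r ^ k * indicator K k"] by (simp add: w_def)
  also have "\<dots> = (\<Sum>k\<in>{..w} \<inter> K. matching_weight w r k)"
    by (subst sum.inter_restrict) (auto intro!: sum.cong simp: matching_weight_def indicator_def)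
  also have "\<dots> \<le> (\<Sum>k\<in>{..w} \<inter> K. 4 / s * total)"
    using matching_weight_le_sum[OF assms(3,4)] assms(5-7) by (intro sum_mono) (simp add: w_def total_def)
  also have "\<dots> = real (card ({..w} \<inter> K)) * (4 / s * total)" by simp
  also have "\<dots> \<le> real (card K) * (4 / s * total)"
    using card_mono[OF assms(2), of "{..w} \<inter> K"] \<open>0 \<le> 4 / s * total\<close>
    by (intro mult_right_mono) auto
  also have "total = (\<Sum>A\<in>matchings S. r ^ card A)"
    using sum_matchings_card[OF assms(1), of "\<lambda>k. r ^ k"]
    by (simp add: total_def w_def matching_weight_def mult.commute)
  finally show ?thesis by (simp add: mult.assoc)
qed

section \<open>Filling isolated non-edges\<close>

definition graphs :: "nat \<Rightarrow> (nat \<times> nat \<Rightarrow> bool) set" where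
  "graphs n = {E. \<forall>x. x \<notin> vertex_pairs n \<longrightarrow> \<not> E x}"

definition universal_vertices :: "nat \<Rightarrow> (nat \<times> nat \<Rightarrow> bool) \<Rightarrow> nat set" where
  "universal_vertices n E = {u. universal_vertex n E u}"

definition isolated_nonedges :: "nat \<Rightarrow> (nat \<times> nat \<Rightarrow> bool) \<Rightarrow> (nat \<times> nat) set" where
  "isolated_nonedges n E = {(u, v). u < v \<and> v < n \<and> \<not> E (u, v) \<and>
     (\<forall>x<n. x \<noteq> u \<and> x \<noteq> v \<longrightarrow> adjacent E u x \<and> adjacent E v x)}"

definition fill_isolated_nonedges :: "nat \<Rightarrow> (nat \<times> nat \<Rightarrow> bool) \<Rightarrow> (nat \<times> nat \<Rightarrow> bool)" where
  "fill_isolated_nonedges n E = (\<lambda>x. E x \<or> x \<in> isolated_nonedges n E)"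

definition delete_edges :: "(nat \<times> nat \<Rightarrow> bool) \<Rightarrow> (nat \<times> nat) set \<Rightarrow> (nat \<times> nat \<Rightarrow> bool)" where
  "delete_edges E A = (\<lambda>x. E x \<and> x \<notin> A)"

lemma adjacent_mono: "(\<And>x. E x \<Longrightarrow> E' x) \<Longrightarrow> adjacent E i j \<Longrightarrow> adjacent E' i j"
  unfolding adjacent_def by (auto split: if_splits)

lemma universal_vertex_mono:
  "(\<And>x. E x \<Longrightarrow> E' x) \<Longrightarrow> universal_vertex n E u \<Longrightarrow> universal_vertex n E' u"
  unfolding universal_vertex_def using adjacent_mono by blast

lemma finite_universal_vertices: "finite (universal_vertices n E)"
  by (rule finite_subset[of _ "{..<n}"]) (auto simp: universal_vertices_def universal_vertex_def)

lemma pairs_within_universal_vertices_edge: "x \<in> pairs_within (universal_vertices n E) \<Longrightarrow> E x"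
  unfolding pairs_within_def universal_vertices_def universal_vertex_def adjacent_def by auto

lemma finite_graphs: "finite (graphs n)"
proof -
  have "graphs n \<subseteq> PiE_dflt (vertex_pairs n) False (\<lambda>_. UNIV)"
    by (auto simp: graphs_def PiE_dflt_def)
  then show ?thesis
    by (rule finite_subset) (simp add: finite_vertex_pairs finite_PiE_dflt)
qed

lemma delete_edges_graphs: "E \<in> graphs n \<Longrightarrow> delete_edges E A \<in> graphs n"
  unfolding graphs_def delete_edges_def by auto

lemma fill_isolated_nonedges_graphs: "E \<in> graphs n \<Longrightarrow> fill_isolated_nonedges n E \<in> graphs n"
  unfolding graphs_def fill_isolated_nonedges_def isolated_nonedges_def vertex_pairs_def by auto

lemma delete_edges_fill_isolated_nonedges:
  "delete_edges (fill_isolated_nonedges n E) (isolated_nonedges n E) = E"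
  unfolding delete_edges_def fill_isolated_nonedges_def
    by (auto simp: fun_eq_iff isolated_nonedges_def)

lemma isolated_nonedge_non_neighbours:
  assumes "(u, v) \<in> isolated_nonedges n E" "c \<in> {u, v}"
  shows "{x. x < n \<and> x \<noteq> c \<and> \<not> adjacent E c x} = {u, v} - {c}"
proof -
  have "u < v" "v < n" using assms(1) by (auto simp: isolated_nonedges_def)
  moreover have "adjacent E c x" if "x < n" "x \<notin> {u, v}" for x
    using assms that by (auto simp: isolated_nonedges_def)
  moreover have "\<not> adjacent E c x" if "x \<in> {u, v} - {c}" for x
    using assms that by (auto simp: isolated_nonedges_def adjacent_def)
  ultimately show ?thesis using assms(2) by auto
qed

lemma is_matching_isolated_nonedges: "is_matching (isolated_nonedges n E)"
  unfolding is_matching_def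
proof (intro ballI impI)
  fix a b assume a: "a \<in> isolated_nonedges n E" and b: "b \<in> isolated_nonedges n E" and "a \<noteq> b"
  obtain u v u' v' where uv: "a = (u, v)" "b = (u', v')" by (cases a, cases b)
  show "{fst a, snd a} \<inter> {fst b, snd b} = {}"
  proof (rule ccontr)
    assume "{fst a, snd a} \<inter> {fst b, snd b} \<noteq> {}"
    then obtain c where c: "c \<in> {u, v}" "c \<in> {u', v'}" using uv by auto
    \<comment> \<open>a shared endpoint has a unique non-neighbour, the other endpoint of either pair\<close>
    have "{u, v} - {c} = {u', v'} - {c}"
      using isolated_nonedge_non_neighbours[OF a[unfolded uv(1)] c(1)]
        isolated_nonedge_non_neighbours[OF b[unfolded uv(2)] c(2)] by simp
    then have "{u, v} = {u', v'}" using c by blast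
    moreover have "u < v" "u' < v'" using a b uv by (auto simp: isolated_nonedges_def)
    ultimately have "a = b" using uv by (auto simp: doubleton_eq_iff)
    then show False using \<open>a \<noteq> b\<close> by contradiction
  qed
qed

lemma isolated_nonedges_subset_pairs_within:
  "isolated_nonedges n E \<subseteq> pairs_within (universal_vertices n (fill_isolated_nonedges n E))"
proof
  fix a assume a: "a \<in> isolated_nonedges n E"
  obtain u v where uv: "a = (u, v)" by (cases a)
  have "u < v" "v < n" using a uv by (auto simp: isolated_nonedges_def)
  have "adjacent (fill_isolated_nonedges n E) y x" if "y \<in> {u, v}" "x < n" "x \<noteq> y" for x y
  proof (cases "x \<in> {u, v}")
    case True
    then show ?thesis
      using that a uv \<open>u < v\<close> by (auto simp: adjacent_def fill_isolated_nonedges_def)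
  next
    case False
    then have "adjacent E y x" using that a uv by (auto simp: isolated_nonedges_def)
    then show ?thesis by (rule adjacent_mono[rotated]) (simp add: fill_isolated_nonedges_def)
  qed
  then show "a \<in> pairs_within (universal_vertices n (fill_isolated_nonedges n E))"
    using uv \<open>u < v\<close> \<open>v < n\<close>
    by (auto simp: pairs_within_def universal_vertices_def universal_vertex_def)
qed

lemma isolated_nonedges_fill: "isolated_nonedges n (fill_isolated_nonedges n E) = {}"
proof (rule ccontr)
  assume "isolated_nonedges n (fill_isolated_nonedges n E) \<noteq> {}"
  then obtain u v where uv: "(u, v) \<in> isolated_nonedges n (fill_isolated_nonedges n E)" by auto
  then have "u < v" "v < n" "\<not> E (u, v)" "(u, v) \<notin> isolated_nonedges n E"
    by (auto simp: isolated_nonedges_def fill_isolated_nonedges_def)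
  \<comment> \<open>had \<open>{y, x}\<close> been filled, \<open>x\<close> would be the only non-neighbour of \<open>y\<close> in \<open>E\<close>;
    but the partner of \<open>y\<close> in \<open>{u, v}\<close> is another one\<close>
  have "adjacent E y x" if "y \<in> {u, v}" "x < n" "x \<noteq> u" "x \<noteq> v" for x y
  proof (rule ccontr)
    assume "\<not> adjacent E y x"
    moreover have "adjacent (fill_isolated_nonedges n E) y x"
      using uv that by (auto simp: isolated_nonedges_def)
    ultimately have "(min y x, max y x) \<in> isolated_nonedges n E"
      by (auto simp: adjacent_def fill_isolated_nonedges_def min_def max_def split: if_splits)
    moreover have "y \<in> {min y x, max y x}" by (auto simp: min_def max_def)
    ultimately have "{z. z < n \<and> z \<noteq> y \<and> \<not> adjacent E y z} = {min y x, max y x} - {y}"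
      by (rule isolated_nonedge_non_neighbours)
    moreover have "(if y = u then v else u) \<in> {z. z < n \<and> z \<noteq> y \<and> \<not> adjacent E y z}"
      using that \<open>u < v\<close> \<open>v < n\<close> \<open>\<not> E (u, v)\<close> by (auto simp: adjacent_def)
    ultimately show False using that by (auto simp: min_def max_def split: if_splits)
  qed
  then have "(u, v) \<in> isolated_nonedges n E"
    using \<open>u < v\<close> \<open>v < n\<close> \<open>\<not> E (u, v)\<close> by (auto simp: isolated_nonedges_def)
  then show False using \<open>(u, v) \<notin> isolated_nonedges n E\<close> by blast
qed

lemma adjacent_delete_matching:
  assumes A: "A \<in> matchings (universal_vertices n E)" and "(u, v) \<in> A" "y \<in> {u, v}"
    and x: "x < n" "x \<notin> {u, v}"
  shows "adjacent (delete_edges E A) y x"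
proof -
  have "universal_vertex n E y"
    using A assms(2,3) by (auto simp: matchings_def pairs_within_def universal_vertices_def)
  then have "adjacent E y x" using x assms(3) by (auto simp: universal_vertex_def)
  moreover have "(min y x, max y x) \<notin> A"
    using is_matching_disjoint[of A u v "min y x" "max y x"] A assms(2,3) x
    by (auto simp: matchings_def min_def max_def split: if_splits)
  ultimately show ?thesis
    by (auto simp: adjacent_def delete_edges_def min_def max_def split: if_splits)
qed

lemma isolated_nonedges_delete_edges:
  assumes E: "isolated_nonedges n E = {}" and A: "A \<in> matchings (universal_vertices n E)"
  shows "isolated_nonedges n (delete_edges E A) = A"
proof (intro equalityI subsetI)
  fix a assume a: "a \<in> isolated_nonedges n (delete_edges E A)"
  show "a \<in> A"
  proof (rule ccontr)
    assume "a \<notin> A"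
    then have "a \<in> isolated_nonedges n E"
      using a unfolding isolated_nonedges_def delete_edges_def
      by (auto intro: adjacent_mono[rotated])
    then show False using E by simp
  qed
next
  fix a assume a: "a \<in> A"
  obtain u v where uv: "a = (u, v)" by (cases a)
  then have "u < v" "v < n"
    using a A
      by (auto simp: matchings_def pairs_within_def universal_vertices_def universal_vertex_def)
  then show "a \<in> isolated_nonedges n (delete_edges E A)"
    using adjacent_delete_matching[OF A a[unfolded uv]] a uv
    by (auto simp: isolated_nonedges_def delete_edges_def)
qed

lemma fill_isolated_nonedges_delete_edges:
  assumes "isolated_nonedges n E = {}" and A: "A \<in> matchings (universal_vertices n E)"
  shows "fill_isolated_nonedges n (delete_edges E A) = E"
proof -
  have "E x" if "x \<in> A" for x
    using A that pairs_within_universal_vertices_edge[of x n E] by (auto simp: matchings_def)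
  then show ?thesis
    unfolding fill_isolated_nonedges_def isolated_nonedges_delete_edges[OF assms]
    by (auto simp: delete_edges_def fun_eq_iff)
qed

lemma fill_isolated_nonedges_fibre:
  assumes "E' \<in> fill_isolated_nonedges n ` graphs n"
  shows "{E \<in> graphs n. fill_isolated_nonedges n E = E'} =
           delete_edges E' ` matchings (universal_vertices n E')"
proof -
  have E': "E' \<in> graphs n" "isolated_nonedges n E' = {}"
    using assms fill_isolated_nonedges_graphs isolated_nonedges_fill by auto
  show ?thesis
  proof (intro equalityI subsetI)
    fix E assume E: "E \<in> {E \<in> graphs n. fill_isolated_nonedges n E = E'}"
    then have "isolated_nonedges n E \<in> matchings (universal_vertices n E')"
      using isolated_nonedges_subset_pairs_within[of n E] is_matching_isolated_nonedges[of n E]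
      by (auto simp: matchings_def)
    then show "E \<in> delete_edges E' ` matchings (universal_vertices n E')"
      using E delete_edges_fill_isolated_nonedges[of n E] by force
  next
    fix E assume "E \<in> delete_edges E' ` matchings (universal_vertices n E')"
    then show "E \<in> {E \<in> graphs n. fill_isolated_nonedges n E = E'}"
      using delete_edges_graphs[OF E'(1)] fill_isolated_nonedges_delete_edges[OF E'(2)] by auto
  qed
qed

lemma sum_graphs_by_fibres:
  fixes F :: "(nat \<times> nat \<Rightarrow> bool) \<Rightarrow> real"
  shows "(\<Sum>E\<in>graphs n. F E) =
    (\<Sum>E'\<in>fill_isolated_nonedges n ` graphs n. \<Sum>A\<in>matchings (universal_vertices n E'). F (delete_edges E' A))"
proof -
  have "(\<Sum>E\<in>graphs n. F E) =
      (\<Sum>E'\<in>fill_isolated_nonedges n ` graphs n. \<Sum>E\<in>{E \<in> graphs n. fill_isolated_nonedges n E = E'}. F E)"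
    by (rule sum.group[symmetric]) (auto simp: finite_graphs)
  also have "\<dots> = (\<Sum>E'\<in>fill_isolated_nonedges n ` graphs n.
      \<Sum>A\<in>matchings (universal_vertices n E'). F (delete_edges E' A))"
  proof (rule sum.cong[OF refl])
    fix E' assume E': "E' \<in> fill_isolated_nonedges n ` graphs n"
    then have "inj_on (delete_edges E') (matchings (universal_vertices n E'))"
      using isolated_nonedges_delete_edges[OF isolated_nonedges_fill]
        by (intro inj_onI) (metis imageE)
    then show "(\<Sum>E\<in>{E \<in> graphs n. fill_isolated_nonedges n E = E'}. F E) =
        (\<Sum>A\<in>matchings (universal_vertices n E'). F (delete_edges E' A))"
      unfolding fill_isolated_nonedges_fibre[OF E'] by (simp add: sum.reindex)
  qed
  finally show ?thesis .
qed

lemma chromatic_number_delete_matching: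
  assumes "A \<in> matchings (universal_vertices n E)"
  shows "chromatic_number n (delete_edges E A) + card A = chromatic_number n E"
proof -
  have "finite A" using assms matchings_finite finite_universal_vertices by blast
  then show ?thesis using assms
  proof (induction A rule: finite_induct)
    case empty
    then show ?case by (simp add: delete_edges_def)
  next
    case (insert a A)
    obtain u v where a: "a = (u, v)" by (cases a)
    have "A \<in> matchings (universal_vertices n E)"
      using insert.prems by (auto simp: matchings_def is_matching_def)
    have "u < v" "E (u, v)"
      using insert.prems a pairs_within_universal_vertices_edge
      by (auto simp: matchings_def pairs_within_def)
    have "universal_vertex n (delete_edges E A) y" if "y \<in> {u, v}" for y
    proof -
      have "adjacent (delete_edges E A) y x" if "x < n" "x \<noteq> y" for x
      proof (cases "x \<in> {u, v}")
        case True
        then show ?thesis using \<open>y \<in> {u, v}\<close> that \<open>u < v\<close> \<open>E (u, v)\<close> insert.hyps(2) a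
          by (auto simp: adjacent_def delete_edges_def)
      next
        case False
        then show ?thesis
          using adjacent_delete_matching[OF insert.prems, of u v y x] \<open>y \<in> {u, v}\<close> that a
          by (auto elim: adjacent_mono[rotated] simp: delete_edges_def)
      qed
      moreover have "y < n" using insert.prems \<open>y \<in> {u, v}\<close> a
        by (auto simp: matchings_def pairs_within_def universal_vertices_def universal_vertex_def)
      ultimately show ?thesis by (simp add: universal_vertex_def)
    qed
    moreover have "delete_edges E (insert a A) = (delete_edges E A)((u, v) := False)"
      by (auto simp: delete_edges_def a fun_eq_iff)
    ultimately have "chromatic_number n (delete_edges E (insert a A)) + 1 = chromatic_number n (delete_edges E A)"
      using chromatic_number_delete_universal_edge[OF \<open>u < v\<close>] by simp
    then show ?case using insert.IH[OF \<open>A \<in> _\<close>] insert.hyps by simp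
  qed
qed

lemma set_pmf_Gnp: "set_pmf (Gnp n p) \<subseteq> graphs n"
  unfolding Gnp_def graphs_def using set_Pi_pmf_subset[OF finite_vertex_pairs, of n False] by blast

lemma prob_Gnp_eq_sum:
  "measure_pmf.prob (Gnp n p) T = (\<Sum>E\<in>graphs n. pmf (Gnp n p) E * indicator T E)"
proof -
  have "measure_pmf.prob (Gnp n p) T = (\<integral>E. indicator T E \<partial>Gnp n p)" by simp
  also have "\<dots> = (\<Sum>E\<in>graphs n. pmf (Gnp n p) E *\<^sub>R indicator T E)"
    by (rule integral_measure_pmf[OF finite_graphs]) (use set_pmf_Gnp in auto)
  finally show ?thesis by simp
qed

lemma pmf_Gnp:
  assumes "0 \<le> p" "p \<le> 1" "E \<in> graphs n"
  shows "pmf (Gnp n p) E = (\<Prod>x\<in>vertex_pairs n. if E x then p else 1 - p)"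
  unfolding Gnp_def
  by (subst pmf_Pi'[OF finite_vertex_pairs]) (use assms in \<open>auto simp: graphs_def intro!: prod.cong\<close>)

lemma pmf_Gnp_delete_edges:
  assumes p: "0 < p" "p \<le> 1" and E: "E \<in> graphs n" and A: "A \<subseteq> {x. E x}"
  shows "pmf (Gnp n p) (delete_edges E A) = pmf (Gnp n p) E * ((1 - p) / p) ^ card A"
proof -
  let ?f = "\<lambda>E x. if E x then p else 1 - p"
  have AV: "A \<subseteq> vertex_pairs n" using A E by (auto simp: graphs_def)
  have split: "pmf (Gnp n p) G = (\<Prod>x\<in>vertex_pairs n - A. ?f G x) * (\<Prod>x\<in>A. ?f G x)"
    if "G \<in> graphs n" for G
    using pmf_Gnp[OF _ p(2) that] p(1) prod.subset_diff[OF AV finite_vertex_pairs] by simp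
  have "(\<Prod>x\<in>vertex_pairs n - A. ?f (delete_edges E A) x) = (\<Prod>x\<in>vertex_pairs n - A. ?f E x)"
    by (rule prod.cong) (auto simp: delete_edges_def)
  moreover have "(\<Prod>x\<in>A. ?f (delete_edges E A) x) = (1 - p) ^ card A"
    by (simp add: delete_edges_def)
  moreover have "(\<Prod>x\<in>A. ?f E x) = (\<Prod>x\<in>A. p)"
    using A by (intro prod.cong) auto
  ultimately show ?thesis
    using split[OF E] split[OF delete_edges_graphs[OF E]] p by (simp add: power_divide)
qed

lemma fibre_prob_interval_le:
  fixes s L I :: nat
  assumes p: "0 < p" "p < 1" and E': "E' \<in> fill_isolated_nonedges n ` graphs n"
    and s: "1 \<le> s"
  defines "r \<equiv> (1 - p) / p" and "W \<equiv> universal_vertices n E'"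
  assumes w_large: "2 * r * (16 * real s ^ 2 + 3) ^ 2 < real (card W)"
      "32 * real s ^ 2 + 2 \<le> real (card W)"
      "8 * real s ^ 2 + 2 * real s + 2 \<le> (real (card W) / 2) * (real (card W) / 2 - 1) * r"
  shows "(\<Sum>A\<in>matchings W. pmf (Gnp n p) (delete_edges E' A) *
            indicator {E. chromatic_number n E \<in> {I..I + L}} (delete_edges E' A))
         \<le> real (L + 1) * (4 / s) * (\<Sum>A\<in>matchings W. pmf (Gnp n p) (delete_edges E' A))"
proof -
  define chi where "chi = chromatic_number n E'"
  define K where "K = {k. k \<le> chi \<and> chi - k \<in> {I..I + L}}"
  have r: "0 < r" using p by (simp add: r_def)
  have "finite K" by (simp add: K_def)
  have "card K \<le> card {I..I + L}"
    by (rule card_inj_on_le[of "\<lambda>k. chi - k"]) (auto simp: K_def inj_on_def)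
  then have card_K: "real (card K) \<le> real (L + 1)" by simp
  have pmf_A: "pmf (Gnp n p) (delete_edges E' A) = pmf (Gnp n p) E' * r ^ card A"
    if "A \<in> matchings W" for A
  proof -
    have "A \<subseteq> pairs_within W" using that by (simp add: matchings_def)
    then have "A \<subseteq> {x. E' x}"
      using pairs_within_universal_vertices_edge[of _ n E'] unfolding W_def by blast
    moreover have "E' \<in> graphs n" using E' fill_isolated_nonedges_graphs by blast
    ultimately show ?thesis using pmf_Gnp_delete_edges[OF p(1)] p by (simp add: r_def)
  qed
  have chi_A: "chromatic_number n (delete_edges E' A) \<in> {I..I + L} \<longleftrightarrow> card A \<in> K"
    if "A \<in> matchings W" for A
    using chromatic_number_delete_matching[of A n E'] that by (auto simp: K_def chi_def W_def)
  have "(\<Sum>A\<in>matchings W. pmf (Gnp n p) (delete_edges E' A) *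
            indicator {E. chromatic_number n E \<in> {I..I + L}} (delete_edges E' A))
      = pmf (Gnp n p) E' * (\<Sum>A\<in>matchings W. r ^ card A * indicator K (card A))"
    using pmf_A chi_A by (simp add: sum_distrib_left indicator_def mult.assoc cong: sum.cong)
  also have "\<dots> \<le> pmf (Gnp n p) E' * (real (card K) * (4 / s) * (\<Sum>A\<in>matchings W. r ^ card A))"
    using sum_matchings_card_in_le[OF _ \<open>finite K\<close> r s] w_large
    by (intro mult_left_mono) (simp_all add: W_def finite_universal_vertices)
  also have "\<dots> \<le> pmf (Gnp n p) E' * (real (L + 1) * (4 / s) * (\<Sum>A\<in>matchings W. r ^ card A))"
    using card_K r by (intro mult_left_mono mult_right_mono) (simp_all add: sum_nonneg)
  also have "\<dots> = real (L + 1) * (4 / s) * (\<Sum>A\<in>matchings W. pmf (Gnp n p) E' * r ^ card A)"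
    by (simp only: sum_distrib_left mult_ac)
  also have "\<dots> = real (L + 1) * (4 / s) * (\<Sum>A\<in>matchings W. pmf (Gnp n p) (delete_edges E' A))"
    using pmf_A by simp
  finally show ?thesis .
qed

lemma chi_prob_interval_le:
  fixes s L I :: nat and w0 :: real
  assumes p: "0 < p" "p < 1" and s: "1 \<le> s"
  defines "r \<equiv> (1 - p) / p"
  assumes w0: "2 * r * (16 * real s ^ 2 + 3) ^ 2 < w0" "32 * real s ^ 2 + 2 \<le> w0"
      "8 * real s ^ 2 + 2 * real s + 2 \<le> (w0 / 2) * (w0 / 2 - 1) * r"
  shows "chi_prob n p {I..I + L} \<le> real (L + 1) * (4 / s) +
    measure_pmf.prob (Gnp n p) {E. real (card (universal_vertices n (fill_isolated_nonedges n E))) < w0}"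
proof -
  define P where "P = pmf (Gnp n p)"
  define good where "good = {E. chromatic_number n E \<in> {I..I + L}}"
  define bad where "bad = {E. real (card (universal_vertices n (fill_isolated_nonedges n E))) < w0}"
  define \<beta> where "\<beta> = real (L + 1) * (4 / s)"
  define M where "M E' = matchings (universal_vertices n E')" for E'
  have fibre: "(\<Sum>A\<in>M E'. P (delete_edges E' A) * indicator good (delete_edges E' A))
      \<le> \<beta> * (\<Sum>A\<in>M E'. P (delete_edges E' A)) + (\<Sum>A\<in>M E'. P (delete_edges E' A) * indicator bad (delete_edges E' A))"
    if E': "E' \<in> fill_isolated_nonedges n ` graphs n" for E'
  proof -
    have "0 \<le> \<beta>" by (simp add: \<beta>_def)
    then have nonneg: "0 \<le> \<beta> * (\<Sum>A\<in>M E'. P (delete_edges E' A))"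
      "0 \<le> (\<Sum>A\<in>M E'. P (delete_edges E' A) * indicator bad (delete_edges E' A))"
      by (auto simp: P_def intro!: sum_nonneg mult_nonneg_nonneg)
    show ?thesis
    proof (cases "real (card (universal_vertices n E')) < w0")
      case True
      then have "delete_edges E' A \<in> bad" if "A \<in> M E'" for A
        using that E' fill_isolated_nonedges_delete_edges[OF isolated_nonedges_fill]
        by (auto simp: bad_def M_def)
      then have "(\<Sum>A\<in>M E'. P (delete_edges E' A) * indicator good (delete_edges E' A))
          \<le> (\<Sum>A\<in>M E'. P (delete_edges E' A) * indicator bad (delete_edges E' A))"
        by (intro sum_mono) (auto simp: P_def indicator_def)
      then show ?thesis using nonneg by linarith
    next
      case False
      define w where "w = real (card (universal_vertices n E'))"
      have "1 \<le> real s ^ 2" using s by simp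
      then have "4 \<le> w0" using w0(2) by linarith
      moreover have "w0 \<le> w" using False by (simp add: w_def)
      moreover have "0 < r" using p by (simp add: r_def)
      ultimately have "(w0 / 2) * (w0 / 2 - 1) * r \<le> (w / 2) * (w / 2 - 1) * r"
        by (intro mult_right_mono mult_mono) auto
      then have "(\<Sum>A\<in>M E'. P (delete_edges E' A) * indicator good (delete_edges E' A))
          \<le> \<beta> * (\<Sum>A\<in>M E'. P (delete_edges E' A))"
        unfolding P_def good_def \<beta>_def M_def
        using fibre_prob_interval_le[OF p E' s] w0 \<open>w0 \<le> w\<close> by (simp add: w_def r_def)
      then show ?thesis using nonneg by linarith
    qed
  qed
  have "chi_prob n p {I..I + L} = (\<Sum>E\<in>graphs n. P E * indicator good E)"
    unfolding chi_prob_def P_def good_def by (rule prob_Gnp_eq_sum)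
  also have "\<dots> = (\<Sum>E'\<in>fill_isolated_nonedges n ` graphs n.
      \<Sum>A\<in>M E'. P (delete_edges E' A) * indicator good (delete_edges E' A))"
    unfolding M_def by (rule sum_graphs_by_fibres)
  also have "\<dots> \<le> (\<Sum>E'\<in>fill_isolated_nonedges n ` graphs n. \<beta> * (\<Sum>A\<in>M E'. P (delete_edges E' A))
      + (\<Sum>A\<in>M E'. P (delete_edges E' A) * indicator bad (delete_edges E' A)))"
    by (rule sum_mono) (rule fibre)
  also have "\<dots> = \<beta> * (\<Sum>E\<in>graphs n. P E * indicator UNIV E) + (\<Sum>E\<in>graphs n. P E * indicator bad E)"
    by (simp add: sum.distrib sum_distrib_left sum_graphs_by_fibres M_def)
  also have "\<dots> = \<beta> + measure_pmf.prob (Gnp n p) bad"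
    using prob_Gnp_eq_sum[of n p UNIV] prob_Gnp_eq_sum[of n p bad] by (simp add: P_def)
  finally show ?thesis by (simp add: \<beta>_def bad_def)
qed

section \<open>Universal vertices\<close>

lemma card_universal_vertices_fill:
  "card (universal_vertices n E) \<le> card (universal_vertices n (fill_isolated_nonedges n E))"
  by (rule card_mono[OF finite_universal_vertices])
     (auto simp: universal_vertices_def fill_isolated_nonedges_def intro: universal_vertex_mono[rotated])

lemma card_universal_vertices_flip_edge:
  "\<bar>real (card (universal_vertices n (E(x:=True)))) - real (card (universal_vertices n (E(x:=False))))\<bar> \<le> 2"
proof -
  have "universal_vertices n (E(x:=False)) \<subseteq> universal_vertices n (E(x:=True))"
    by (auto simp: universal_vertices_def intro: universal_vertex_mono[rotated])
  then have lower: "card (universal_vertices n (E(x:=False))) \<le> card (universal_vertices n (E(x:=True)))"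
    by (rule card_mono[OF finite_universal_vertices])
  have "universal_vertices n (E(x:=True)) \<subseteq> universal_vertices n (E(x:=False)) \<union> {fst x, snd x}"
  proof
    fix u assume "u \<in> universal_vertices n (E(x:=True))"
    moreover have "adjacent (E(x:=False)) u y = adjacent (E(x:=True)) u y" if "u \<notin> {fst x, snd x}" for y
      using that by (cases x) (auto simp: adjacent_def)
    ultimately show "u \<in> universal_vertices n (E(x:=False)) \<union> {fst x, snd x}"
      by (auto simp: universal_vertices_def universal_vertex_def)
  qed
  then have "card (universal_vertices n (E(x:=True)))
      \<le> card (universal_vertices n (E(x:=False)) \<union> {fst x, snd x})"
    by (intro card_mono) (simp_all add: finite_universal_vertices)
  also have "\<dots> \<le> card (universal_vertices n (E(x:=False))) + card {fst x, snd x}"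
    by (rule card_Un_le)
  also have "card {fst x, snd x} \<le> 2" by (simp add: card_insert_le_m1)
  finally show ?thesis using lower by linarith
qed

lemma prob_universal_vertex_ge:
  assumes p: "0 \<le> p" "p \<le> 1" and "u < n"
  shows "p ^ n \<le> measure_pmf.prob (Gnp n p) {E. universal_vertex n E u}"
proof -
  define B where "B = (\<lambda>y. (min u y, max u y)) ` {y. y < n \<and> y \<noteq> u}"
  define C where "C = Pi (vertex_pairs n) (\<lambda>x. if x \<in> B then {True} else UNIV)"
  have BV: "B \<subseteq> vertex_pairs n" using \<open>u < n\<close> by (auto simp: B_def vertex_pairs_def min_def max_def)
  have "card B \<le> card {y. y < n \<and> y \<noteq> u}" unfolding B_def by (rule card_image_le) simp
  also have "\<dots> \<le> n" using card_mono[of "{..<n}" "{y. y < n \<and> y \<noteq> u}"] by auto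
  finally have "p ^ n \<le> p ^ card B" by (rule power_decreasing[OF _ p])
  also have "p ^ card B = (\<Prod>x\<in>vertex_pairs n. if x \<in> B then p else 1)"
    using BV by (simp add: prod.If_cases[OF finite_vertex_pairs] Int_absorb1)
  also have "\<dots> = (\<Prod>x\<in>vertex_pairs n. measure_pmf.prob (bernoulli_pmf p) (if x \<in> B then {True} else UNIV))"
    using p by (intro prod.cong) (auto simp: measure_pmf_single)
  also have "\<dots> = measure_pmf.prob (Gnp n p) C"
    unfolding Gnp_def C_def by (rule measure_Pi_pmf_Pi[OF finite_vertex_pairs, symmetric])
  also have "\<dots> \<le> measure_pmf.prob (Gnp n p) {E. universal_vertex n E u}"
  proof (rule measure_pmf.finite_measure_mono)
    show "C \<subseteq> {E. universal_vertex n E u}"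
    proof
      fix E assume "E \<in> C"
      then have "E (min u y, max u y)" if "y < n" "y \<noteq> u" for y
        using that BV by (auto simp: C_def B_def Pi_def split: if_splits)
      moreover have "adjacent E u y = E (min u y, max u y)" if "y \<noteq> u" for y
        using that by (auto simp: adjacent_def min_def max_def)
      ultimately show "E \<in> {E. universal_vertex n E u}"
        using \<open>u < n\<close> by (simp add: universal_vertex_def)
    qed
  qed simp
  finally show ?thesis .
qed

lemma expectation_card_universal_vertices_ge:
  assumes "0 \<le> p" "p \<le> 1"
  shows "real n * p ^ n \<le> measure_pmf.expectation (Gnp n p) (\<lambda>E. real (card (universal_vertices n E)))"
proof -
  have card: "real (card (universal_vertices n E)) = (\<Sum>u<n. indicator {E. universal_vertex n E u} E)" for E
  proof -
    have "universal_vertices n E = {..<n} \<inter> {u. universal_vertex n E u}"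
      by (auto simp: universal_vertices_def universal_vertex_def)
    then show ?thesis by (simp add: indicator_def sum.If_cases)
  qed
  have "real n * p ^ n \<le> (\<Sum>u<n. measure_pmf.prob (Gnp n p) {E. universal_vertex n E u})"
    using sum_mono[of "{..<n}" "\<lambda>_. p ^ n"] prob_universal_vertex_ge[OF assms] by fastforce
  also have "\<dots> = measure_pmf.expectation (Gnp n p) (\<lambda>E. real (card (universal_vertices n E)))"
    unfolding card
    by (subst Bochner_Integration.integral_sum) (auto intro: integrable_measure_pmf_finite finite_set_pmf_Gnp)
  finally show ?thesis .
qed

lemma prob_few_universal_vertices:
  assumes p: "0 < p" "p \<le> 1" and "1 \<le> n"
  shows "measure_pmf.prob (Gnp n p) {E. real (card (universal_vertices n E)) < real n * p ^ n / 2}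
           \<le> 16 * (1 - p) / p ^ (2 * n)"
proof -
  define X where "X E = real (card (universal_vertices n E))" for E
  define t where "t = real n * p ^ n / 2"
  have t: "0 < t" using assms by (simp add: t_def)
  have "2 * t \<le> measure_pmf.expectation (Gnp n p) X"
    using expectation_card_universal_vertices_ge[of p n] p unfolding X_def[abs_def] t_def by simp
  then have "{E. X E < t} \<subseteq> {E. t \<le> \<bar>X E - measure_pmf.expectation (Gnp n p) X\<bar>}"
    by auto
  then have "measure_pmf.prob (Gnp n p) {E. X E < t}
      \<le> measure_pmf.prob (Gnp n p) {E. t \<le> \<bar>X E - measure_pmf.expectation (Gnp n p) X\<bar>}"
    by (intro measure_pmf.finite_measure_mono) auto
  also have "\<dots> \<le> measure_pmf.variance (Gnp n p) X / t\<^sup>2"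
    using measure_pmf.Chebyshev_inequality[where M = "Gnp n p" and f = X and a = t] t
    by (simp add: integrable_measure_pmf_finite finite_set_pmf_Gnp)
  also have "\<dots> \<le> 4 * real n ^ 2 * (1 - p) / t\<^sup>2"
    using variance_Gnp_le[of p n X 2] card_universal_vertices_flip_edge p
    by (intro divide_right_mono) (auto simp: X_def)
  also have "\<dots> = 16 * (1 - p) / p ^ (2 * n)"
  proof -
    have "p ^ (2 * n) = p ^ n * p ^ n" by (simp add: mult_2 power_add)
    then show ?thesis using assms by (simp add: t_def field_simps power2_eq_square)
  qed
  finally show ?thesis by (simp add: X_def t_def)
qed

section \<open>Anti-concentration of the chromatic number\<close>

lemma matching_weight_le_sum_conditions:
  fixes Dp \<sigma> w0 r :: real and s :: nat
  assumes Dp: "Dp \<ge> 1" and \<sigma>0: "\<sigma> > 0" and \<sigma>a: "\<sigma>^2 * Dp \<le> 1/10000" and \<sigma>b: "\<sigma>^4 * Dp^3 \<le> 1/100000000"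
    and \<sigma>c: "\<sigma>^2 \<le> 1/100"
    and r: "r > 0" and w04: "w0 \<ge> 4" and wr: "w0 * r \<le> Dp" and s1: "1 \<le> s"
    and ss: "real s \<le> \<sigma> * w0 * sqrt r"
  shows "2 * r * (16 * real s^2 + 3)^2 < w0" and "32 * real s^2 + 2 \<le> w0"
    and "8 * real s^2 + 2 * real s + 2 \<le> (w0/2) * (w0/2 - 1) * r"
proof -
  define T where "T = \<sigma>^2 * w0^2 * r"
  have s2T: "real s^2 \<le> T"
  proof -
    have "real s^2 \<le> (\<sigma> * w0 * sqrt r)^2" using ss by (intro power_mono) auto
    also have "\<dots> = T" using r by (simp add: T_def power_mult_distrib)
    finally show ?thesis .
  qed
  have sge: "real s^2 \<ge> real s" "real s \<ge> 1" using s1 by (auto simp: power2_eq_square)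
  have w0r: "w0^2 * r \<le> w0 * Dp"
  proof -
    have "w0^2 * r = w0 * (w0 * r)" by (simp add: power2_eq_square)
    also have "\<dots> \<le> w0 * Dp" using wr w04 by (intro mult_left_mono) auto
    finally show ?thesis .
  qed
  have T1: "T \<le> w0 / 10000"
  proof -
    have "T = \<sigma>^2 * (w0^2 * r)" by (simp add: T_def)
    also have "\<dots> \<le> \<sigma>^2 * (w0 * Dp)" using w0r by (intro mult_left_mono) auto
    also have "\<dots> = (\<sigma>^2 * Dp) * w0" by simp
    also have "\<dots> \<le> (1/10000) * w0" using \<sigma>a w04 by (intro mult_right_mono) auto
    finally show ?thesis by simp
  qed
  show "32 * real s^2 + 2 \<le> w0" using s2T T1 sge by linarith
  show "8 * real s^2 + 2 * real s + 2 \<le> (w0/2) * (w0/2 - 1) * r"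
  proof -
    have "8 * real s^2 + 2 * real s + 2 \<le> 12 * T" using s2T sge by linarith
    also have "12 * T \<le> (1/8) * (w0^2 * r)"
    proof -
      have "12 * T = (12 * \<sigma>^2) * (w0^2 * r)" by (simp add: T_def)
      also have "\<dots> \<le> (1/8) * (w0^2 * r)" using \<sigma>c r by (intro mult_right_mono) auto
      finally show ?thesis .
    qed
    also have "(1/8) * (w0^2 * r) \<le> (w0/2) * (w0/2 - 1) * r"
    proof -
      have "4 * w0 \<le> w0 * w0" using w04 by (intro mult_right_mono) auto
      then have h: "(1/8) * w0^2 \<le> (w0/2) * (w0/2 - 1)"
        by (simp add: power2_eq_square algebra_simps)
      have "(1/8) * w0^2 * r \<le> (w0/2) * (w0/2 - 1) * r"
        by (rule mult_right_mono[OF h]) (use r in simp)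
      then show ?thesis by (simp only: mult.assoc)
    qed
    finally show ?thesis .
  qed
  show "2 * r * (16 * real s^2 + 3)^2 < w0"
  proof -
    have a: "16 * real s^2 + 3 \<le> 19 * T" using s2T sge by linarith
    have "(16 * real s^2 + 3)^2 \<le> (19 * T)^2" using a sge by (intro power_mono) auto
    then have "2 * r * (16 * real s^2 + 3)^2 \<le> 2 * r * (19 * T)^2" using r by simp
    also have "2 * r * (19 * T)^2 = 722 * (\<sigma>^4 * (w0 * r)^3) * w0"
      unfolding T_def by (simp add: power2_eq_square power3_eq_cube power4_eq_xxxx algebra_simps)
    also have "\<dots> \<le> 722 * (\<sigma>^4 * Dp^3) * w0"
    proof -
      have "(w0 * r)^3 \<le> Dp^3" using wr w04 r by (intro power_mono) auto
      then show ?thesis using w04 by (intro mult_right_mono mult_left_mono) auto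
    qed
    also have "\<dots> \<le> 722 * (1/100000000) * w0" using \<sigma>b w04
      by (intro mult_right_mono mult_left_mono) auto
    also have "\<dots> < w0" using w04 by simp
    finally show ?thesis .
  qed
qed

lemma sigma_bounds:
  fixes Dp :: real assumes Dp: "Dp \<ge> 1"
  defines "\<sigma> \<equiv> 1 / (100 * (Dp + 1)^2)"
  shows "\<sigma> > 0" "\<sigma>^2 * Dp \<le> 1/10000" "\<sigma>^4 * Dp^3 \<le> 1/100000000" "\<sigma>^2 \<le> 1/100"
proof -
  have D1: "Dp + 1 \<ge> 1" using Dp by simp
  show "\<sigma> > 0" unfolding \<sigma>_def using Dp by simp
  define X where "X = (Dp+1)^4"
  have s2: "\<sigma>^2 = 1 / (10000 * X)" unfolding \<sigma>_def X_def
    by (simp add: power_mult_distrib power_divide flip: power_mult)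
  have XD: "X \<ge> Dp"
  proof -
    have "Dp \<le> Dp + 1" by simp
    also have "\<dots> \<le> (Dp+1)^4" using D1 by (rule self_le_power) simp
    finally show ?thesis by (simp add: X_def)
  qed
  have X1: "X \<ge> 1" using D1 by (simp add: X_def one_le_power)
  have "\<sigma>^2 * Dp = Dp / (10000 * X)" using s2 by simp
  also have "\<dots> \<le> X / (10000 * X)" using XD X1 by (intro divide_right_mono) auto
  also have "\<dots> = 1/10000" using X1 by simp
  finally show "\<sigma>^2 * Dp \<le> 1/10000" .
  have "\<sigma>^2 = 1 / (10000 * X)" by (rule s2)
  also have "\<dots> \<le> 1 / 10000" using X1 by (simp add: field_simps)
  finally show "\<sigma>^2 \<le> 1/100" by simp
  define Y where "Y = (Dp+1)^8"
  have s4: "\<sigma>^4 = 1 / (100000000 * Y)" unfolding \<sigma>_def Y_def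
    by (simp add: power_mult_distrib power_divide flip: power_mult)
  have YD: "Y \<ge> Dp^3"
  proof -
    have "Dp^3 \<le> (Dp+1)^3" using Dp by (intro power_mono) auto
    also have "\<dots> \<le> (Dp+1)^8" by (rule power_increasing[OF _ D1]) simp
    finally show ?thesis by (simp add: Y_def)
  qed
  have Y1: "Y \<ge> 1" using D1 by (simp add: Y_def one_le_power)
  have "\<sigma>^4 * Dp^3 = Dp^3 / (100000000 * Y)" using s4 by simp
  also have "\<dots> \<le> Y / (100000000 * Y)" using YD Y1 by (intro divide_right_mono) auto
  also have "\<dots> = 1/100000000" using Y1 by simp
  finally show "\<sigma>^4 * Dp^3 \<le> 1/100000000" .
qed

lemma exp_le_one_minus_power:
  fixes q :: real and n :: nat and D :: real
  assumes q: "0 \<le> q" "q \<le> 1/2" and qn: "q * real n \<le> D"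
  shows "(1 - q)^n \<ge> exp (-2 * D)"
proof -
  have l: "ln (1 - q) \<ge> - 2 * q"
  proof -
    have "- q - 2 * q^2 \<le> ln (1 - q)" by (rule ln_one_minus_pos_lower_bound) (use q in auto)
    moreover have "2 * q^2 \<le> q"
    proof -
      have "q * (2 * q) \<le> q * 1" using q by (intro mult_left_mono) auto
      then show ?thesis by (simp add: power2_eq_square algebra_simps)
    qed
    ultimately show ?thesis by linarith
  qed
  have "(1 - q)^n = exp (real n * ln (1 - q))" using q by (simp add: exp_of_nat_mult exp_ln)
  also have "real n * ln (1 - q) \<ge> real n * (- 2 * q)" using l by (intro mult_left_mono) auto
  then have "exp (real n * ln (1 - q)) \<ge> exp (-2 * (q * real n))" by (simp add: algebra_simps)
  moreover have "exp (-2 * (q * real n)) \<ge> exp (-2 * D)" using qn by simp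
  ultimately show ?thesis by linarith
qed

lemma prob_few_universal_vertices_fill_le:
  fixes D \<epsilon> \<beta> :: real
  assumes "0 < \<epsilon>" "0 < \<beta>" "0 < p" "p \<le> 1" "0 < n" "\<beta> \<le> p ^ n"
    and "(1 - p) * real n \<le> D" "32 * D / (\<epsilon> * \<beta>\<^sup>2) \<le> real n"
  shows "measure_pmf.prob (Gnp n p)
           {E. real (card (universal_vertices n (fill_isolated_nonedges n E))) < real n * \<beta> / 2} \<le> \<epsilon> / 2"
proof -
  have "0 < \<epsilon> * \<beta>\<^sup>2" "0 < real n" using assms(1,2,5) by simp_all
  have "measure_pmf.prob (Gnp n p)
           {E. real (card (universal_vertices n (fill_isolated_nonedges n E))) < real n * \<beta> / 2}
      \<le> measure_pmf.prob (Gnp n p) {E. real (card (universal_vertices n E)) < real n * p ^ n / 2}"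
  proof (rule measure_pmf.finite_measure_mono)
    show "{E. real (card (universal_vertices n (fill_isolated_nonedges n E))) < real n * \<beta> / 2}
        \<subseteq> {E. real (card (universal_vertices n E)) < real n * p ^ n / 2}"
    proof
      fix E assume "E \<in> {E. real (card (universal_vertices n (fill_isolated_nonedges n E))) < real n * \<beta> / 2}"
      moreover have "real (card (universal_vertices n E)) \<le> real (card (universal_vertices n (fill_isolated_nonedges n E)))"
        using card_universal_vertices_fill by simp
      moreover have "real n * \<beta> \<le> real n * p ^ n" using assms(6) by (intro mult_left_mono) auto
      ultimately show "E \<in> {E. real (card (universal_vertices n E)) < real n * p ^ n / 2}" by simp
    qed
  qed simp
  also have "\<dots> \<le> 16 * (1 - p) / p ^ (2 * n)"
    using assms \<open>0 < real n\<close> by (intro prob_few_universal_vertices) auto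
  also have "\<dots> \<le> 16 * (1 - p) / \<beta>\<^sup>2"
  proof (rule divide_left_mono)
    have "\<beta>\<^sup>2 \<le> (p ^ n)\<^sup>2" using assms(2,6) by (intro power_mono) auto
    then show "\<beta>\<^sup>2 \<le> p ^ (2 * n)" by (simp add: power_mult[symmetric] mult.commute)
  qed (use assms in auto)
  also have "\<dots> \<le> \<epsilon> / 2"
  proof -
    have "(1 - p) * real n \<le> (\<epsilon> * \<beta>\<^sup>2 / 32) * real n"
      using assms(7,8) \<open>0 < \<epsilon> * \<beta>\<^sup>2\<close> by (simp add: field_simps)
    then have "1 - p \<le> \<epsilon> * \<beta>\<^sup>2 / 32" using \<open>0 < real n\<close> by (rule mult_right_le_imp_le)
    then show ?thesis using assms(2) by (simp add: field_simps)
  qed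
  finally show ?thesis .
qed

lemma matching_scale_exists:
  fixes Dp w0 r :: real
  defines "\<sigma> \<equiv> 1 / (100 * (Dp + 1)\<^sup>2)"
  assumes "1 \<le> Dp" "0 < r" "4 \<le> w0" "w0 * r \<le> Dp" "2 \<le> \<sigma> * w0 * sqrt r"
  shows "\<exists>s::nat. 1 \<le> s \<and> \<sigma> * w0 * sqrt r / 2 \<le> real s \<and>
    2 * r * (16 * real s ^ 2 + 3) ^ 2 < w0 \<and> 32 * real s ^ 2 + 2 \<le> w0 \<and>
    8 * real s ^ 2 + 2 * real s + 2 \<le> (w0 / 2) * (w0 / 2 - 1) * r"
proof -
  define s where "s = nat \<lfloor>\<sigma> * w0 * sqrt r\<rfloor>"
  have "real s \<le> \<sigma> * w0 * sqrt r" "\<sigma> * w0 * sqrt r - 1 \<le> real s"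
    using assms(6) by (simp_all add: s_def)
  then have "\<sigma> * w0 * sqrt r / 2 \<le> real s" "1 \<le> s"
    using assms(6) by linarith+
  moreover note sigma_bounds[OF assms(2)]
  ultimately show ?thesis
    using matching_weight_le_sum_conditions[of Dp \<sigma> r w0 s] \<open>real s \<le> _\<close> assms(2-5)
    unfolding \<sigma>_def by (intro exI[of _ s]) auto
qed

lemma chi_prob_short_interval_le:
  fixes D \<epsilon> :: real and n I :: nat
  defines "\<beta> \<equiv> exp (- 2 * (D + 1))" and "\<sigma> \<equiv> 1 / (100 * (2 * (D + 1) + 1)\<^sup>2)"
  assumes D: "0 < D" and \<epsilon>: "0 < \<epsilon>" and q: "0 < 1 - p" "p \<le> 1" "(1 - p) * real n \<le> D + 1"
    and n_large: "2 * (D + 1) \<le> real n" "8 / \<beta> \<le> real n" "32 * (D + 1) / (\<epsilon> * \<beta>\<^sup>2) \<le> real n"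
    and z_large: "4 / (\<sigma> * \<beta>) \<le> real n * sqrt (1 - p)" "64 / (\<sigma> * \<beta> * \<epsilon>) \<le> real n * sqrt (1 - p)"
  shows "chi_prob n p {I .. I + nat \<lfloor>\<epsilon> * \<sigma> * \<beta> / 64 * real n * sqrt (1 - p)\<rfloor>} \<le> \<epsilon>"
proof -
  define z where "z = real n * sqrt (1 - p)"
  define r where "r = (1 - p) / p"
  define w0 where "w0 = real n * \<beta> / 2"
  define L where "L = nat \<lfloor>\<epsilon> * \<sigma> * \<beta> / 64 * real n * sqrt (1 - p)\<rfloor>"
  have \<beta>: "0 < \<beta>" "\<beta> \<le> 1" and \<sigma>: "0 < \<sigma>" using D by (auto simp: \<beta>_def \<sigma>_def)
  have n: "0 < real n" using n_large(1) D by (smt (verit))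
  have "(1 - p) * real n \<le> 1 / 2 * real n" using q(3) n_large(1) by simp
  then have "1 - p \<le> 1 / 2" using n by (rule mult_right_le_imp_le)
  then have p: "1 / 2 \<le> p" "0 < p" "p < 1" using q(1) by auto
  have pn: "\<beta> \<le> p ^ n"
    using exp_le_one_minus_power[of "1 - p" n "D + 1"] q \<open>1 - p \<le> 1 / 2\<close> by (simp add: \<beta>_def)
  have r: "0 < r" "1 - p \<le> r" "r \<le> 2 * (1 - p)"
    using p divide_left_mono[of p 1 "1 - p"] divide_left_mono[of "1 / 2" p "1 - p"]
    by (simp_all add: r_def)
  have "4 \<le> w0" using n_large(2) \<beta> by (simp add: w0_def field_simps)
  have "w0 * r \<le> real n * (2 * (1 - p))"
    using r \<beta> n by (intro mult_mono) (auto simp: w0_def)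
  then have w0r: "w0 * r \<le> 2 * (D + 1)" using q(3) by (simp add: algebra_simps)
  have scale: "\<sigma> * \<beta> * z / 2 \<le> \<sigma> * w0 * sqrt r"
    using \<sigma> \<beta> n r by (auto simp: z_def w0_def intro!: mult_left_mono)
  moreover have "4 \<le> \<sigma> * \<beta> * z"
    using z_large(1) \<sigma> \<beta> by (simp add: z_def field_simps)
  ultimately obtain s :: nat where s: "1 \<le> s" "\<sigma> * \<beta> * z / 4 \<le> real s"
    and w0: "2 * r * (16 * real s ^ 2 + 3) ^ 2 < w0" "32 * real s ^ 2 + 2 \<le> w0"
      "8 * real s ^ 2 + 2 * real s + 2 \<le> (w0 / 2) * (w0 / 2 - 1) * r"
    using matching_scale_exists[of "2 * (D + 1)" r w0] D r \<open>4 \<le> w0\<close> w0r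
    unfolding \<sigma>_def by fastforce
  have "real (L + 1) * (4 / real s) \<le> \<epsilon> / 2"
  proof -
    have "0 < z" using n q by (simp add: z_def)
    have "real L \<le> \<epsilon> * \<sigma> * \<beta> / 64 * z"
      using \<open>0 < z\<close> \<sigma> \<beta> \<epsilon> of_int_floor_le[of "\<epsilon> * \<sigma> * \<beta> / 64 * z"]
      by (simp add: L_def z_def mult.assoc)
    moreover have "4 / real s \<le> 16 / (\<sigma> * \<beta> * z)"
      using s \<open>0 < z\<close> \<sigma> \<beta> divide_left_mono[of "\<sigma> * \<beta> * z / 4" "real s" 4]
      by (simp add: mult_pos_pos)
    ultimately have "real (L + 1) * (4 / real s) \<le> (\<epsilon> * \<sigma> * \<beta> / 64 * z + 1) * (16 / (\<sigma> * \<beta> * z))"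
      using \<open>0 < z\<close> \<sigma> \<beta> \<epsilon> by (intro mult_mono) auto
    also have "\<dots> = \<epsilon> / 4 + 16 / (\<sigma> * \<beta> * z)"
      using \<open>0 < z\<close> \<sigma> \<beta> by (simp add: field_simps)
    also have "16 / (\<sigma> * \<beta> * z) \<le> \<epsilon> / 4"
      using z_large(2) \<open>0 < z\<close> \<sigma> \<beta> \<epsilon> by (simp add: z_def field_simps)
    finally show ?thesis by simp
  qed
  moreover have "measure_pmf.prob (Gnp n p)
      {E. real (card (universal_vertices n (fill_isolated_nonedges n E))) < w0} \<le> \<epsilon> / 2"
    unfolding w0_def
    using prob_few_universal_vertices_fill_le[OF \<epsilon> \<beta>(1) p(2) q(2) _ pn q(3) n_large(3)] n by simp
  moreover have "chi_prob n p {I .. I + L} \<le> real (L + 1) * (4 / real s) +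
      measure_pmf.prob (Gnp n p) {E. real (card (universal_vertices n (fill_isolated_nonedges n E))) < w0}"
    using chi_prob_interval_le[OF p(2,3) s(1)] w0 by (simp add: r_def)
  ultimately show ?thesis unfolding L_def by linarith
qed

lemma edge_prob_regime_eventually:
  assumes "edge_prob_regime D p"
  shows "\<forall>\<^sub>F n in sequentially. 0 < 1 - p n \<and> p n \<le> 1 \<and> (1 - p n) * real n \<le> D + 1"
    and "filterlim (\<lambda>n. real n * sqrt (1 - p n)) at_top sequentially"
proof -
  obtain e where e: "e \<longlonglongrightarrow> 0" and ev: "\<forall>\<^sub>F n in sequentially. 1 - p n \<le> (D + e n) / real n"
    using assms by (auto simp: edge_prob_regime_def)
  have p: "0 \<le> p n" "p n \<le> 1" for n using assms by (auto simp: edge_prob_regime_def)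
  have nq: "filterlim (\<lambda>n. real n ^ 2 * (1 - p n)) at_top sequentially"
    using assms by (simp add: edge_prob_regime_def)
  have "\<forall>\<^sub>F n in sequentially. 1 \<le> real n ^ 2 * (1 - p n)"
    using nq by (simp add: filterlim_at_top)
  moreover have "\<forall>\<^sub>F n in sequentially. e n < 1" using order_tendstoD(2)[OF e] by simp
  moreover have "\<forall>\<^sub>F n in sequentially. 1 \<le> n" by (rule eventually_ge_at_top)
  ultimately show "\<forall>\<^sub>F n in sequentially. 0 < 1 - p n \<and> p n \<le> 1 \<and> (1 - p n) * real n \<le> D + 1"
    using ev
  proof eventually_elim
    case (elim n)
    then have "0 < 1 - p n" using p[of n] by (cases "p n = 1") auto
    moreover have "(1 - p n) * real n \<le> D + e n" using elim by (simp add: field_simps)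
    ultimately show ?case using elim p[of n] by simp
  qed
  have "real n * sqrt (1 - p n) = sqrt (real n ^ 2 * (1 - p n))" for n
    using p[of n] by (simp add: real_sqrt_mult)
  then show "filterlim (\<lambda>n. real n * sqrt (1 - p n)) at_top sequentially"
    using filterlim_compose[OF sqrt_at_top nq] by simp
qed

lemma eventually_le_imp_vanishing_slack:
  fixes f :: "nat \<Rightarrow> real"
  assumes "\<forall>\<^sub>F n in sequentially. f n \<le> a"
  shows "\<exists>\<delta>. \<delta> \<longlonglongrightarrow> 0 \<and> (\<forall>n. f n \<le> a + \<delta> n)"
proof (intro exI conjI allI)
  have "\<forall>\<^sub>F n in sequentially. max 0 (f n - a) = 0"
    using assms by eventually_elim simp
  then show "(\<lambda>n. max 0 (f n - a)) \<longlonglongrightarrow> 0" by (rule tendsto_eventually)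
  show "f n \<le> a + max 0 (f n - a)" for n by simp
qed

lemma chromatic_number_anticoncentration:
  fixes D \<epsilon> :: real
  assumes D: "0 < D" and \<epsilon>: "0 < \<epsilon>"
  shows "\<exists>c > 0. \<forall>p :: nat \<Rightarrow> real. edge_prob_regime D p \<longrightarrow>
    (\<forall>I :: nat \<Rightarrow> nat. \<exists>\<delta> :: nat \<Rightarrow> real. \<delta> \<longlonglongrightarrow> 0 \<and>
       (\<forall>n. chi_prob n (p n) {I n .. I n + nat \<lfloor>c * real n * sqrt (1 - p n)\<rfloor>} \<le> \<epsilon> + \<delta> n))"
proof -
  define \<beta> :: real where "\<beta> = exp (- 2 * (D + 1))"
  define \<sigma> :: real where "\<sigma> = 1 / (100 * (2 * (D + 1) + 1)\<^sup>2)"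
  have "0 < \<beta>" "0 < \<sigma>" using D by (auto simp: \<beta>_def \<sigma>_def)
  show ?thesis
  proof (intro exI[of _ "\<epsilon> * \<sigma> * \<beta> / 64"] conjI allI impI)
    show "0 < \<epsilon> * \<sigma> * \<beta> / 64" using \<open>0 < \<beta>\<close> \<open>0 < \<sigma>\<close> \<epsilon> by simp
    fix p :: "nat \<Rightarrow> real" and I :: "nat \<Rightarrow> nat"
    assume reg: "edge_prob_regime D p"
    have "\<forall>\<^sub>F n in sequentially. max (max (2 * (D + 1)) (8 / \<beta>)) (32 * (D + 1) / (\<epsilon> * \<beta>\<^sup>2)) \<le> real n"
      using filterlim_real_sequentially unfolding filterlim_at_top by blast
    moreover have "\<forall>\<^sub>F n in sequentially. max (4 / (\<sigma> * \<beta>)) (64 / (\<sigma> * \<beta> * \<epsilon>)) \<le> real n * sqrt (1 - p n)"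
      using edge_prob_regime_eventually(2)[OF reg] unfolding filterlim_at_top by blast
    ultimately have "\<forall>\<^sub>F n in sequentially.
        chi_prob n (p n) {I n .. I n + nat \<lfloor>\<epsilon> * \<sigma> * \<beta> / 64 * real n * sqrt (1 - p n)\<rfloor>} \<le> \<epsilon>"
      using edge_prob_regime_eventually(1)[OF reg]
    proof eventually_elim
      case (elim n)
      then show ?case
        unfolding \<beta>_def \<sigma>_def
        by (intro chi_prob_short_interval_le D \<epsilon>) (auto simp: \<beta>_def \<sigma>_def)
    qed
    then show "\<exists>\<delta>. \<delta> \<longlonglongrightarrow> 0 \<and> (\<forall>n. chi_prob n (p n)
        {I n .. I n + nat \<lfloor>\<epsilon> * \<sigma> * \<beta> / 64 * real n * sqrt (1 - p n)\<rfloor>} \<le> \<epsilon> + \<delta> n)"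
      by (rule eventually_le_imp_vanishing_slack)
  qed
qed

theorem theorem9:
  fixes D \<epsilon> :: real
  assumes "0 < D" and "0 < \<epsilon>"
  shows
    "(\<forall>(p :: nat \<Rightarrow> real) (\<omega> :: nat \<Rightarrow> real).
        edge_prob_regime D p \<longrightarrow> filterlim \<omega> at_top sequentially \<longrightarrow>
        (\<exists>I :: nat \<Rightarrow> nat.
           (\<lambda>n. chi_prob n (p n)
                  {I n .. I n + nat \<lfloor>\<omega> n * real n * sqrt (1 - p n)\<rfloor>}) \<longlonglongrightarrow> 1))
     \<and>
     (\<exists>c > 0. \<forall>p :: nat \<Rightarrow> real. edge_prob_regime D p \<longrightarrow>
        (\<forall>I :: nat \<Rightarrow> nat. \<exists>\<delta> :: nat \<Rightarrow> real. \<delta> \<longlonglongrightarrow> 0 \<and>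
           (\<forall>n. chi_prob n (p n)
                  {I n .. I n + nat \<lfloor>c * real n * sqrt (1 - p n)\<rfloor>} \<le> \<epsilon> + \<delta> n)))"
proof (intro conjI allI impI)
  fix p \<omega> :: "nat \<Rightarrow> real"
  assume "edge_prob_regime D p" "filterlim \<omega> at_top sequentially"
  then show "\<exists>I :: nat \<Rightarrow> nat.
      (\<lambda>n. chi_prob n (p n) {I n .. I n + nat \<lfloor>\<omega> n * real n * sqrt (1 - p n)\<rfloor>}) \<longlonglongrightarrow> 1"
    by (intro chromatic_number_concentration) (auto simp: edge_prob_regime_def)
next
  show "\<exists>c > 0. \<forall>p :: nat \<Rightarrow> real. edge_prob_regime D p \<longrightarrow>
      (\<forall>I :: nat \<Rightarrow> nat. \<exists>\<delta> :: nat \<Rightarrow> real. \<delta> \<longlonglongrightarrow> 0 \<and>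
         (\<forall>n. chi_prob n (p n) {I n .. I n + nat \<lfloor>c * real n * sqrt (1 - p n)\<rfloor>} \<le> \<epsilon> + \<delta> n))"
    using chromatic_number_anticoncentration[OF assms] .
qed

end
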